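(* Let $\mathcal G$ be a finite group whose action on $\mathrm{Her}_{\tilde{\mathcal V}}$ satisfies $g\cdot I_{\tilde{\mathcal V}}=I_{\tilde{\mathcal V}}$ for all $g\in\mathcal G$. Assume $\mathcal S=\mathcal S_G$ and that Problem (P) is $\mathcal G$-symmetric. Assume further that for each $t\in\{1,\dots,T\}$ there is a subgroup $\mathcal H^{(t)}\subseteq\mathcal G$ and an irreducible projective (unitary or anti-unitary) representation $\mathcal H^{(t)}\ni h\mapsto U'_{h,t}$ on $\mathcal V_t$ such that for all $h\in\mathcal H^{(t)}$ and $X\in\mathrm{Her}_{\tilde{\mathcal V}}$, $$\mathrm{Tr}_{\mathcal W_T\otimes\mathcal V_T\otimes\cdots\otimes\mathcal V_{t+1}\otimes\mathcal W_t}(h\cdot X)=(\mathrm{Ad}_{U'_{h,t}}\otimes\mathrm{id}_{\mathcal W_{t-1}\otimes\mathcal V_{t-1}\otimes\cdots\otimes\mathcal W_1\otimes\mathcal V_1})\big(\mathrm{Tr}_{\mathcal W_T\otimes\mathcal V_T\otimes\cdots\otimes\mathcal V_{t+1}\otimes\mathcal W_t}X\big).$$ Then the optimal value of Problem (P) equals the optimal value obtained when $\mathcal S$ is replaced by $\mathcal S_\Psi:=\{I_{\tilde{\mathcal V}}/\prod_{t=1}^TN_{\mathcal V_t}\}$, i.e. $\sup_{\Phi\in\mathsf P}P(\Phi)=\sup\{P(\Phi):\Phi\in\mathcal C,\ \sum_m\Phi_m=I_{\tilde{\mathcal V}}/\prod_{t}N_{\mathcal V_t},\ \eta_j(\Phi)\le0\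 \forall j\}$.
   Context: Standing setup. All Hilbert spaces are finite-dimensional complex. Fix an integer $T\ge1$ and systems $\mathcal V_1,\dots,\mathcal V_T,\mathcal W_1,\dots,\mathcal W_T$; set $\mathcal W_0:=\mathbb C$ and $\tilde{\mathcal V}:=\mathcal W_T\otimes\mathcal V_T\otimes\cdots\otimes\mathcal W_1\otimes\mathcal V_1$. $N_{\mathcal X}$ is the dimension of $\mathcal X$; $\mathrm{Her}_{\mathcal X}$ is the real Hilbert space of Hermitian operators on $\mathcal X$ with inner product $\langle X,Y\rangle=\mathrm{Tr}(XY)$, $\mathrm{Pos}_{\mathcal X}$ the positive semidefinite operators, $I_{\mathcal X}$ the identity, $\mathrm{Tr}_{\mathcal X}$ partial trace; $\overline A$ is closure. $\mathcal I_n:=\{0,\dots,n-1\}$. $\mathcal S_G$ is the set of operators $I_{\mathcal W_T}\otimes\tau_T$ where $\tau_t\in\mathrm{Pos}_{\mathcal V_t\otimes\mathcal W_{t-1}\otimes\mathcal V_{t-1}\otimes\cdots\otimes\mathcal W_1\otimes\mathcal V_1}$ ($t=1,\dots,T$) satisfy $\mathrm{Tr}\,\tau_1=1$ and $\mathrm{Tr}_{\mathcal V_t}\tau_t=I_{\mathcal W_{t-1}}\otimes\tau_{t-1}$ for $2\le t\le T$. Fix $M\ge2$; $\mathcal C_G:=\mathrm{Pos}_{\tilde{\mathcal V}}^M$; $\mathcal T_G:=\{\Phi=\{\Phi_m\}_{m=0}^{M-1}\in\mathcal C_G:\sum_m\Phi_m\in\mathcal S_G\}$. Data: $J\ge0$,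 $c_m,a_{j,m}\in\mathrm{Her}_{\tilde{\mathcal V}}$, $b_j\in\mathbb R$; $\eta_j(\Phi):=\sum_m\langle\Phi_m,a_{j,m}\rangle-b_j$, $P(\Phi):=\sum_m\langle\Phi_m,c_m\rangle$. $\mathcal T$ is a nonempty convex subset of $\mathcal T_G$, $\mathsf P:=\{\Phi\in\mathcal T:\eta_j(\Phi)\le0\ \forall j\}$ (assumed to satisfy $\overline{\mathsf P}=\{\Phi\in\overline{\mathcal T}:\eta_j(\Phi)\le0\ \forall j\}$); $\mathcal C\subseteq\mathcal C_G$ a closed convex cone and $\mathcal S\subseteq\mathcal S_G$ a closed convex set with $\overline{\mathcal T}=\{\Phi\in\mathcal C:\sum_m\Phi_m\in\mathcal S\}$. Problem (P): maximize $P(\Phi)$ over $\Phi\in\mathsf P$ (value $\sup$, $-\infty$ if empty). Symmetry: for a finite group $\mathcal G$, Problem (P) is $\mathcal G$-symmetric if (a) there are group actions $x\mapsto g\cdot x$ (with $(gh)\cdot x=g\cdot(h\cdot x)$, $e\cdot x=x$) of $\mathcal G$ on $\mathcal I_M$, on $\mathcal I_J$ and on $\mathrm{Her}_{\tilde{\mathcal V}}$; (b) each map $x\mapsto g\cdot x$ on $\mathrm{Her}_{\tilde{\mathcal V}}$ is linear with $\langle g\cdot x,g\cdot y\rangle=\langle x,y\rangle$; (c) for all $g,j,m$: $\Phi^{(g)}\in\mathcal T$ for $\Phi\in\mathcal T$, $\Phi^{(g)}\in\mathcal C$ for $\Phi\in\mathcal C$, $g\cdot\varphi\in\mathcal S$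 for $\varphi\in\mathcal S$, $g\cdot a_{j,m}=a_{g\cdot j,g\cdot m}$, $b_j=b_{g\cdot j}$, $g\cdot c_m=c_{g\cdot m}$, where $\Phi^{(g)}:=\{g^{-1}\cdot\Phi_{g\cdot m}\}_m$. Representations: for $U$ a unitary or anti-unitary operator on $\mathcal X$, $\mathrm{Ad}_U(X):=UXU^\dagger$. A map $h\mapsto U_h$ from a group to unitary or anti-unitary operators on $\mathcal X$ is a projective (unitary or anti-unitary) representation if $\mathrm{Ad}_{U_e}=\mathrm{id}$ and $\mathrm{Ad}_{U_h}\circ\mathrm{Ad}_{U_{h'}}=\mathrm{Ad}_{U_{hh'}}$ for all $h,h'$; it is irreducible if the only subspaces of $\mathcal X$ invariant under all $U_h$ are $\{0\}$ and $\mathcal X$. *)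

theory Defs
  imports "Jordan_Normal_Form.Schur_Decomposition" "HOL-Algebra.Group" "HOL-Library.Extended_Real"
begin

text \<open>The tensor product of operators is the Kronecker product with the convention that
 the basis index of the composite of a left factor of dimension n and a right factor of
 dimension m is a*m+b (a the left index, b the right index).  This convention is
 associative, so a composite W_T (x) V_T (x) ... (x) W_1 (x) V_1 is a flat index space.\<close>

definition mtrace :: "complex mat \<Rightarrow> complex" where
  "mtrace A = (\<Sum>i<dim_row A. A $$ (i,i))"

definition herm :: "nat \<Rightarrow> complex mat \<Rightarrow> bool" where
  "herm n A \<longleftrightarrow> A \<in> carrier_mat n n \<and> mat_adjoint A = A"

definition psd :: "nat \<Rightarrow> complex mat \<Rightarrow> bool" where
  "psd n A \<longleftrightarrow> herm n A \<and> (\<forall>v \<in> carrier_vec n. 0 \<le> Re (conjugate v \<bullet> (A *\<^sub>v v)))"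

definition hs_inner :: "complex mat \<Rightarrow> complex mat \<Rightarrow> real" where
  "hs_inner X Y = Re (mtrace (X * Y))"

definition kron :: "complex mat \<Rightarrow> complex mat \<Rightarrow> complex mat" where
  "kron A B = mat (dim_row A * dim_row B) (dim_col A * dim_col B)
     (\<lambda>(i,j). A $$ (i div dim_row B, j div dim_col B) * B $$ (i mod dim_row B, j mod dim_col B))"

definition ptr_left :: "nat \<Rightarrow> nat \<Rightarrow> complex mat \<Rightarrow> complex mat" where
  "ptr_left n m X = mat m m (\<lambda>(i,j). \<Sum>k<n. X $$ (k*m+i, k*m+j))"

definition ptranspose_left :: "nat \<Rightarrow> nat \<Rightarrow> complex mat \<Rightarrow> complex mat" where
  "ptranspose_left n m Y = mat (n*m) (n*m)
     (\<lambda>(i,j). Y $$ ((j div m)*m + i mod m, (i div m)*m + j mod m))"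

text \<open>A unitary or anti-unitary operator U on C^n is encoded as a pair (V, b) with V a unitary
 matrix: if b = False then U = V, if b = True then U = V K with K complex conjugation in the
 computational basis (every anti-unitary operator has this form).\<close>

definition unitary_mat :: "nat \<Rightarrow> complex mat \<Rightarrow> bool" where
  "unitary_mat n V \<longleftrightarrow> V \<in> carrier_mat n n \<and> V * mat_adjoint V = 1\<^sub>m n \<and> mat_adjoint V * V = 1\<^sub>m n"

definition op_apply :: "complex mat \<times> bool \<Rightarrow> complex vec \<Rightarrow> complex vec" where
  "op_apply U v = fst U *\<^sub>v (if snd U then conjugate v else v)"

text \<open>Ad_U(X) = U X U^dagger; for U = V K this is V conj(X) V^dagger\<close>
definition Ad :: "complex mat \<times> bool \<Rightarrow> complex mat \<Rightarrow> complex mat" where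
  "Ad U X = fst U * (if snd U then map_mat cnj X else X) * mat_adjoint (fst U)"

text \<open>(Ad_U (x) id_m) on Hermitian operators of the composite n*m (U acting on the left
 factor of dimension n).  On product operators A (x) B with A, B Hermitian it gives
 Ad_U(A) (x) B, and it is the real-linear extension of this (for anti-unitary U = V K,
 conj(A) = A^T for Hermitian A, hence the partial transpose).\<close>
definition Ad_tensor_id :: "complex mat \<times> bool \<Rightarrow> nat \<Rightarrow> nat \<Rightarrow> complex mat \<Rightarrow> complex mat" where
  "Ad_tensor_id U n m Y =
     kron (fst U) (1\<^sub>m m) * (if snd U then ptranspose_left n m Y else Y) * mat_adjoint (kron (fst U) (1\<^sub>m m))"

definition is_subspace :: "nat \<Rightarrow> complex vec set \<Rightarrow> bool" where
  "is_subspace n S \<longleftrightarrow> S \<subseteq> carrier_vec n \<and> 0\<^sub>v n \<in> S \<and>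
     (\<forall>v\<in>S. \<forall>w\<in>S. v + w \<in> S) \<and> (\<forall>c. \<forall>v\<in>S. c \<cdot>\<^sub>v v \<in> S)"

definition proj_rep :: "('g, 'z) monoid_scheme \<Rightarrow> 'g set \<Rightarrow> nat \<Rightarrow> ('g \<Rightarrow> complex mat \<times> bool) \<Rightarrow> bool" where
  "proj_rep G H n U \<longleftrightarrow>
     (\<forall>h\<in>H. unitary_mat n (fst (U h))) \<and>
     (\<forall>X \<in> carrier_mat n n. Ad (U \<one>\<^bsub>G\<^esub>) X = X) \<and>
     (\<forall>h\<in>H. \<forall>h'\<in>H. \<forall>X \<in> carrier_mat n n. Ad (U h) (Ad (U h') X) = Ad (U (h \<otimes>\<^bsub>G\<^esub> h')) X)"

definition irreducible_rep :: "'g set \<Rightarrow> nat \<Rightarrow> ('g \<Rightarrow> complex mat \<times> bool) \<Rightarrow> bool" where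
  "irreducible_rep H n U \<longleftrightarrow>
     (\<forall>S. is_subspace n S \<and> (\<forall>h\<in>H. \<forall>v\<in>S. op_apply (U h) v \<in> S)
        \<longrightarrow> S = {0\<^sub>v n} \<or> S = carrier_vec n)"

text \<open>dV t = N_{V_t}, dW t = N_{W_t} (t = 1..T).
 Rdim dV dW t = dimension of W_t (x) V_t (x) ... (x) W_1 (x) V_1 (= 1 for t = 0).
 Qdim T dV dW t = dimension of W_T (x) V_T (x) ... (x) W_{t+1} (x) V_{t+1}.\<close>

definition Rdim :: "(nat \<Rightarrow> nat) \<Rightarrow> (nat \<Rightarrow> nat) \<Rightarrow> nat \<Rightarrow> nat" where
  "Rdim dV dW t = (\<Prod>s\<in>{1..t}. dW s * dV s)"

definition Qdim :: "nat \<Rightarrow> (nat \<Rightarrow> nat) \<Rightarrow> (nat \<Rightarrow> nat) \<Rightarrow> nat \<Rightarrow> nat" where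
  "Qdim T dV dW t = (\<Prod>s\<in>{t+1..T}. dW s * dV s)"

text \<open>S_G: I_{W_T} (x) tau_T, where tau_t is an operator on V_t (x) W_{t-1} (x) ... (x) V_1
 (dimension dV t * Rdim (t-1)).\<close>
definition S_G :: "nat \<Rightarrow> (nat \<Rightarrow> nat) \<Rightarrow> (nat \<Rightarrow> nat) \<Rightarrow> complex mat set" where
  "S_G T dV dW = {kron (1\<^sub>m (dW T)) (\<tau> T) | \<tau>.
     (\<forall>t\<in>{1..T}. psd (dV t * Rdim dV dW (t-1)) (\<tau> t)) \<and> mtrace (\<tau> 1) = 1 \<and>
     (\<forall>t\<in>{2..T}. ptr_left (dV t) (Rdim dV dW (t-1)) (\<tau> t) = kron (1\<^sub>m (dW (t-1))) (\<tau> (t-1)))}"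

text \<open>An M-tuple {Phi_m}_{m<M} of D x D operators is a function nat => complex mat, with the
 normalisation Phi m = 0 for m >= M.\<close>

definition tuple_space :: "nat \<Rightarrow> nat \<Rightarrow> (nat \<Rightarrow> complex mat) set" where
  "tuple_space M D = {\<Phi>. (\<forall>m<M. \<Phi> m \<in> carrier_mat D D) \<and> (\<forall>m. M \<le> m \<longrightarrow> \<Phi> m = 0\<^sub>m D D)}"

definition C_G :: "nat \<Rightarrow> nat \<Rightarrow> (nat \<Rightarrow> complex mat) set" where
  "C_G M D = {\<Phi> \<in> tuple_space M D. \<forall>m<M. psd D (\<Phi> m)}"

definition msum :: "nat \<Rightarrow> nat \<Rightarrow> (nat \<Rightarrow> complex mat) \<Rightarrow> complex mat" where
  "msum M D \<Phi> = mat D D (\<lambda>(i,j). \<Sum>m<M. \<Phi> m $$ (i,j))"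

definition T_G :: "nat \<Rightarrow> nat \<Rightarrow> (nat \<Rightarrow> nat) \<Rightarrow> (nat \<Rightarrow> nat) \<Rightarrow> (nat \<Rightarrow> complex mat) set" where
  "T_G M T dV dW = {\<Phi> \<in> C_G M (Rdim dV dW T). msum M (Rdim dV dW T) \<Phi> \<in> S_G T dV dW}"

text \<open>closure of a set of M-tuples (entrywise = norm topology, finite dimensions)\<close>
definition tuple_closure :: "nat \<Rightarrow> nat \<Rightarrow> (nat \<Rightarrow> complex mat) set \<Rightarrow> (nat \<Rightarrow> complex mat) set" where
  "tuple_closure M D A = {\<Phi> \<in> tuple_space M D. \<exists>\<Phi>s. (\<forall>k. \<Phi>s k \<in> A) \<and>
     (\<forall>m<M. \<forall>i<D. \<forall>j<D. (\<lambda>k. \<Phi>s k m $$ (i,j)) \<longlonglongrightarrow> \<Phi> m $$ (i,j))}"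

definition tuple_convex :: "(nat \<Rightarrow> complex mat) set \<Rightarrow> bool" where
  "tuple_convex A \<longleftrightarrow> (\<forall>\<Phi>\<in>A. \<forall>\<Psi>\<in>A. \<forall>u::real. 0 \<le> u \<and> u \<le> 1 \<longrightarrow>
     (\<lambda>m. complex_of_real u \<cdot>\<^sub>m \<Phi> m + complex_of_real (1 - u) \<cdot>\<^sub>m \<Psi> m) \<in> A)"

definition tuple_cone :: "(nat \<Rightarrow> complex mat) set \<Rightarrow> bool" where
  "tuple_cone A \<longleftrightarrow> (\<forall>\<Phi>\<in>A. \<forall>u::real. 0 \<le> u \<longrightarrow> (\<lambda>m. complex_of_real u \<cdot>\<^sub>m \<Phi> m) \<in> A)"

definition eta :: "nat \<Rightarrow> (nat \<Rightarrow> nat \<Rightarrow> complex mat) \<Rightarrow> (nat \<Rightarrow> real) \<Rightarrow> nat \<Rightarrow> (nat \<Rightarrow> complex mat) \<Rightarrow> real" where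
  "eta M a b j \<Phi> = (\<Sum>m<M. hs_inner (\<Phi> m) (a j m)) - b j"

definition Pobj :: "nat \<Rightarrow> (nat \<Rightarrow> complex mat) \<Rightarrow> (nat \<Rightarrow> complex mat) \<Rightarrow> real" where
  "Pobj M c \<Phi> = (\<Sum>m<M. hs_inner (\<Phi> m) (c m))"

definition tuple_act :: "('g, 'z) monoid_scheme \<Rightarrow> nat \<Rightarrow> nat \<Rightarrow> ('g \<Rightarrow> nat \<Rightarrow> nat) \<Rightarrow>
    ('g \<Rightarrow> complex mat \<Rightarrow> complex mat) \<Rightarrow> 'g \<Rightarrow> (nat \<Rightarrow> complex mat) \<Rightarrow> (nat \<Rightarrow> complex mat)" where
  "tuple_act G M D actM actH g \<Phi> =
     (\<lambda>m. if m < M then actH (inv\<^bsub>G\<^esub> g) (\<Phi> (actM g m)) else 0\<^sub>m D D)"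

definition index_action :: "('g, 'z) monoid_scheme \<Rightarrow> nat \<Rightarrow> ('g \<Rightarrow> nat \<Rightarrow> nat) \<Rightarrow> bool" where
  "index_action G n act \<longleftrightarrow>
     (\<forall>g\<in>carrier G. \<forall>x<n. act g x < n) \<and> (\<forall>x<n. act \<one>\<^bsub>G\<^esub> x = x) \<and>
     (\<forall>g\<in>carrier G. \<forall>h\<in>carrier G. \<forall>x<n. act (g \<otimes>\<^bsub>G\<^esub> h) x = act g (act h x))"

definition her_action :: "('g, 'z) monoid_scheme \<Rightarrow> nat \<Rightarrow> ('g \<Rightarrow> complex mat \<Rightarrow> complex mat) \<Rightarrow> bool" where
  "her_action G D act \<longleftrightarrow>
     (\<forall>g\<in>carrier G. \<forall>X. herm D X \<longrightarrow> herm D (act g X)) \<and>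
     (\<forall>X. herm D X \<longrightarrow> act \<one>\<^bsub>G\<^esub> X = X) \<and>
     (\<forall>g\<in>carrier G. \<forall>h\<in>carrier G. \<forall>X. herm D X \<longrightarrow> act (g \<otimes>\<^bsub>G\<^esub> h) X = act g (act h X)) \<and>
     (\<forall>g\<in>carrier G. \<forall>X Y. herm D X \<and> herm D Y \<longrightarrow> act g (X + Y) = act g X + act g Y) \<and>
     (\<forall>g\<in>carrier G. \<forall>X. \<forall>r::real. herm D X \<longrightarrow>
        act g (complex_of_real r \<cdot>\<^sub>m X) = complex_of_real r \<cdot>\<^sub>m act g X) \<and>
     (\<forall>g\<in>carrier G. \<forall>X Y. herm D X \<and> herm D Y \<longrightarrow> hs_inner (act g X) (act g Y) = hs_inner X Y)"

end

theory Submission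
  imports Defs "Jordan_Normal_Form.Spectral_Radius"
begin

text \<open>
  Every point of the reduced problem satisfies \<open>\<Sum>\<^sub>m \<Phi>\<^sub>m \<in> S\<^sub>G\<close>, hence lies in the closure of the
  feasible set, and the objective is continuous; this gives one inequality. For the other, average a
  feasible \<open>\<Phi>\<close> over the finite group: by convexity and symmetry the average is feasible with the
  same objective value, and \<open>\<sigma> = \<Sum>\<^sub>m \<Phi>\<^sub>m\<close> becomes \<open>G\<close>-invariant. By the covariance assumption
  each marginal of \<open>\<sigma>\<close> on \<open>V\<^sub>t \<otimes> W\<^sub>t\<^sub>-\<^sub>1 \<otimes> \<dots> \<otimes> V\<^sub>1\<close> is then invariant under \<open>Ad\<^sub>U \<otimes> id\<close>, so by
  Schur's lemma for the irreducible representation it is \<open>I \<otimes> X\<close> for some \<open>X\<close>. Going up the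
  partial-trace recursion that defines \<open>S\<^sub>G\<close>, this forces every \<open>\<tau>\<^sub>t\<close>, and finally \<open>\<sigma>\<close>, to be
  maximally mixed.
\<close>

lemma sum_lessThan_mult:
  "(\<Sum>p<n*m. f p) = (\<Sum>c<n. \<Sum>k<(m::nat). f (c*m+k) :: 'a::comm_monoid_add)"
proof -
  have "(\<Sum>k<m. f (c*m+k)) = (\<Sum>p\<in>{c*m..<c*m+m}. f p)" for c
    using sum.shift_bounds_nat_ivl[of f 0 "c*m" m] by (simp add: atLeast0LessThan add.commute)
  then show ?thesis by (simp add: sum.nat_group)
qed

lemma pair_index_less: "k < n \<Longrightarrow> i < m \<Longrightarrow> k*m + i < n*(m::nat)"
proof -
  assume "k < n" "i < m"
  then have "k*m + i < (k+1)*m" by simp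
  also have "\<dots> \<le> n*m" using \<open>k < n\<close> by (intro mult_le_mono1) simp
  finally show ?thesis .
qed

lemma pair_index_eq_iff: "p < m \<Longrightarrow> q < (m::nat) \<Longrightarrow> a*m + p = b*m + q \<longleftrightarrow> a = b \<and> p = q"
  by (metis add_right_cancel div_mult_self1 div_less less_nat_zero_code mod_mult_self3 mod_less
      add.commute add_0 not_less0 neq0_conv)

lemma pair_index_cases:
  assumes "i < n*m"
  obtains a p where "i = a*m + p" "a < n" "p < (m::nat)"
  using assms
  by (metis div_mult_mod_eq less_mult_imp_div_less mod_less_divisor mult_zero_right nat_neq_iff not_less0)

lemma mult_mat_index:
  "A \<in> carrier_mat n k \<Longrightarrow> B \<in> carrier_mat k m \<Longrightarrow> i < n \<Longrightarrow> j < m \<Longrightarrow>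
   (A * B) $$ (i,j) = (\<Sum>l<k. A $$ (i,l) * B $$ (l,j))"
  by (simp add: scalar_prod_def lessThan_atLeast0)

lemma mult_mat_vec_index:
  "A \<in> carrier_mat n m \<Longrightarrow> v \<in> carrier_vec m \<Longrightarrow> i < n \<Longrightarrow> (A *\<^sub>v v) $ i = (\<Sum>j<m. A $$ (i,j) * v $ j)"
  by (simp add: scalar_prod_def lessThan_atLeast0)

lemma smult_smult_mat: "a \<cdot>\<^sub>m (b \<cdot>\<^sub>m A) = (a * b) \<cdot>\<^sub>m (A :: 'a::semigroup_mult mat)"
  by (rule eq_matI) (auto simp: mult.assoc)

lemma mat_adjoint_carrier: "A \<in> carrier_mat n m \<Longrightarrow> mat_adjoint A \<in> carrier_mat m n"
  unfolding mat_adjoint_def by auto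

lemma mat_adjoint_index:
  "A \<in> carrier_mat n m \<Longrightarrow> i < m \<Longrightarrow> j < n \<Longrightarrow> mat_adjoint A $$ (i,j) = cnj (A $$ (j,i))"
  unfolding mat_adjoint_def by (auto simp: mat_of_rows_def)

lemma sandwich_index:
  assumes V: "V \<in> carrier_mat n n" and X: "X \<in> carrier_mat n n" and a: "a < n" and b: "b < n"
  shows "(V * X * mat_adjoint V) $$ (a,b) = (\<Sum>c<n. \<Sum>d<n. V $$ (a,c) * X $$ (c,d) * cnj (V $$ (b,d)))"
proof -
  have VX: "V * X \<in> carrier_mat n n" using V X by simp
  have "(V * X * mat_adjoint V) $$ (a,b) = (\<Sum>d<n. (V * X) $$ (a,d) * mat_adjoint V $$ (d,b))"
    by (rule mult_mat_index[OF VX mat_adjoint_carrier[OF V] a b])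
  also have "\<dots> = (\<Sum>d<n. (\<Sum>c<n. V $$ (a,c) * X $$ (c,d)) * cnj (V $$ (b,d)))"
    using a b by (intro sum.cong refl) (simp add: mat_adjoint_index[OF V] mult_mat_index[OF V X])
  finally show ?thesis by (simp add: sum_distrib_right) (rule sum.swap)
qed

lemma herm_carrier: "herm n A \<Longrightarrow> A \<in> carrier_mat n n"
  unfolding herm_def by simp

lemma psd_herm: "psd n A \<Longrightarrow> herm n A"
  unfolding psd_def by simp

lemma herm_index:
  assumes A: "herm n A" and "i < n" "j < n"
  shows "A $$ (i,j) = cnj (A $$ (j,i))"
proof -
  have "A $$ (i,j) = mat_adjoint A $$ (i,j)" using A unfolding herm_def by simp
  also have "\<dots> = cnj (A $$ (j,i))" using assms herm_carrier[OF A] by (simp add: mat_adjoint_index)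
  finally show ?thesis .
qed

lemma hermI:
  assumes A: "A \<in> carrier_mat n n" and sym: "\<And>i j. i < n \<Longrightarrow> j < n \<Longrightarrow> A $$ (i,j) = cnj (A $$ (j,i))"
  shows "herm n A"
proof -
  have "mat_adjoint A = A"
  proof (rule eq_matI)
    fix i j assume "i < dim_row A" "j < dim_col A"
    then have "i < n" "j < n" using A by auto
    then show "mat_adjoint A $$ (i,j) = A $$ (i,j)" using sym[of j i] mat_adjoint_index[OF A] by simp
  qed (use mat_adjoint_carrier[OF A] A in auto)
  then show ?thesis unfolding herm_def using A by simp
qed

lemma herm_cnj_eq_transpose:
  assumes A: "herm n A" shows "map_mat cnj A = transpose_mat A"
proof (rule eq_matI)
  fix i j assume "i < dim_row (transpose_mat A)" "j < dim_col (transpose_mat A)"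
  then have "i < n" "j < n" using herm_carrier[OF A] by auto
  then show "map_mat cnj A $$ (i,j) = transpose_mat A $$ (i,j)"
    using herm_index[OF A \<open>j < n\<close> \<open>i < n\<close>] herm_carrier[OF A] by simp
qed (use herm_carrier[OF A] in auto)

lemma mtrace_carrier: "A \<in> carrier_mat n n \<Longrightarrow> mtrace A = (\<Sum>i<n. A $$ (i,i))"
  unfolding mtrace_def by simp

lemma mtrace_one [simp]: "mtrace (1\<^sub>m n :: complex mat) = of_nat n"
  unfolding mtrace_def by simp

lemma kron_carrier: "A \<in> carrier_mat a a \<Longrightarrow> B \<in> carrier_mat b b \<Longrightarrow> kron A B \<in> carrier_mat (a*b) (a*b)"
  unfolding kron_def by auto

lemma kron_pair_index:
  "A \<in> carrier_mat n n \<Longrightarrow> B \<in> carrier_mat m m \<Longrightarrow> a < n \<Longrightarrow> b < n \<Longrightarrow> p < m \<Longrightarrow> q < m \<Longrightarrow>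
   kron A B $$ (a*m+p, b*m+q) = A $$ (a,b) * B $$ (p,q)"
proof -
  assume A: "A \<in> carrier_mat n n" and B: "B \<in> carrier_mat m m" and "a < n" "b < n" "p < m" "q < m"
  moreover have "(a*m+p) div m = a" "(a*m+p) mod m = p" "(b*m+q) div m = b" "(b*m+q) mod m = q"
    using \<open>p < m\<close> \<open>q < m\<close> by simp_all
  ultimately show ?thesis unfolding kron_def by (simp add: pair_index_less)
qed

lemma kron_one_smult_one: "kron (1\<^sub>m a) (c \<cdot>\<^sub>m 1\<^sub>m b :: complex mat) = c \<cdot>\<^sub>m 1\<^sub>m (a*b)"
proof (rule eq_matI)
  fix i j assume "i < dim_row (c \<cdot>\<^sub>m 1\<^sub>m (a*b))" "j < dim_col (c \<cdot>\<^sub>m 1\<^sub>m (a*b))"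
  then have i: "i < a*b" and j: "j < a*b" by auto
  obtain x p where ixp: "i = x*b + p" "x < a" "p < b" using pair_index_cases[OF i] .
  obtain y q where jyq: "j = y*b + q" "y < a" "q < b" using pair_index_cases[OF j] .
  have "kron (1\<^sub>m a) (c \<cdot>\<^sub>m 1\<^sub>m b) $$ (i,j) = (if x = y \<and> p = q then c else 0)"
    unfolding ixp jyq by (subst kron_pair_index[of _ a _ b]) (use ixp jyq in auto)
  then show "kron (1\<^sub>m a) (c \<cdot>\<^sub>m 1\<^sub>m b) $$ (i,j) = (c \<cdot>\<^sub>m 1\<^sub>m (a*b)) $$ (i,j)"
    using i j unfolding ixp jyq by (simp add: pair_index_eq_iff[OF ixp(3) jyq(3)])
qed (auto simp: kron_def)

lemma ptr_left_carrier [simp]: "ptr_left n m X \<in> carrier_mat m m"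
  unfolding ptr_left_def by simp

lemma ptr_left_dim [simp]: "dim_row (ptr_left n m X) = m" "dim_col (ptr_left n m X) = m"
  unfolding ptr_left_def by simp_all

lemma ptr_left_index: "i < m \<Longrightarrow> j < m \<Longrightarrow> ptr_left n m X $$ (i,j) = (\<Sum>k<n. X $$ (k*m+i, k*m+j))"
  unfolding ptr_left_def by simp

lemma ptr_left_kron:
  assumes A: "A \<in> carrier_mat n n" and B: "B \<in> carrier_mat m m"
  shows "ptr_left n m (kron A B) = mtrace A \<cdot>\<^sub>m B"
proof (rule eq_matI)
  fix i j assume "i < dim_row (mtrace A \<cdot>\<^sub>m B)" "j < dim_col (mtrace A \<cdot>\<^sub>m B)"
  then have i: "i < m" and j: "j < m" using B by auto
  then have "ptr_left n m (kron A B) $$ (i,j) = (\<Sum>k<n. A $$ (k,k) * B $$ (i,j))"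
    using A B by (simp add: ptr_left_index kron_pair_index)
  then show "ptr_left n m (kron A B) $$ (i,j) = (mtrace A \<cdot>\<^sub>m B) $$ (i,j)"
    using A B i j by (simp add: mtrace_carrier sum_distrib_right)
qed (use B in auto)

lemma ptr_left_kron_one: "B \<in> carrier_mat m m \<Longrightarrow> ptr_left n m (kron (1\<^sub>m n) B) = of_nat n \<cdot>\<^sub>m B"
  by (simp add: ptr_left_kron)

lemma ptr_left_mult: "ptr_left (n1*n2) m X = ptr_left n2 m (ptr_left n1 (n2*m) X)"
proof (rule eq_matI)
  fix i j assume "i < dim_row (ptr_left n2 m (ptr_left n1 (n2*m) X))" "j < dim_col (ptr_left n2 m (ptr_left n1 (n2*m) X))"
  then have i: "i < m" and j: "j < m" by auto
  have "ptr_left (n1*n2) m X $$ (i,j) = (\<Sum>c<n1. \<Sum>d<n2. X $$ ((c*n2+d)*m+i, (c*n2+d)*m+j))"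
    using i j by (simp add: ptr_left_index sum_lessThan_mult)
  also have "\<dots> = (\<Sum>d<n2. \<Sum>c<n1. X $$ (c*(n2*m)+(d*m+i), c*(n2*m)+(d*m+j)))"
    by (subst sum.swap) (simp add: algebra_simps)
  also have "\<dots> = ptr_left n2 m (ptr_left n1 (n2*m) X) $$ (i,j)"
    using i j by (simp add: ptr_left_index pair_index_less)
  finally show "ptr_left (n1*n2) m X $$ (i,j) = ptr_left n2 m (ptr_left n1 (n2*m) X) $$ (i,j)" .
qed auto

lemma ptr_left_smult: "X \<in> carrier_mat (n*m) (n*m) \<Longrightarrow> ptr_left n m (c \<cdot>\<^sub>m X) = c \<cdot>\<^sub>m ptr_left n m X"
  by (rule eq_matI) (simp_all add: ptr_left_index pair_index_less sum_distrib_left)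

lemma ptr_left_one: "X \<in> carrier_mat n n \<Longrightarrow> ptr_left n 1 X = mtrace X \<cdot>\<^sub>m 1\<^sub>m 1"
  by (rule eq_matI) (simp_all add: ptr_left_index mtrace_carrier)

lemma ptr_left_smult_one: "ptr_left n m (c \<cdot>\<^sub>m 1\<^sub>m (n*m)) = (of_nat n * c) \<cdot>\<^sub>m (1\<^sub>m m :: complex mat)"
  using ptr_left_kron_one[of "c \<cdot>\<^sub>m 1\<^sub>m m" m n] by (simp add: kron_one_smult_one smult_smult_mat)

lemma herm_ptr_left:
  assumes X: "herm (n*m) X" shows "herm m (ptr_left n m X)"
proof (rule hermI)
  fix i j assume "i < m" "j < m"
  then have "X $$ (k*m+i, k*m+j) = cnj (X $$ (k*m+j, k*m+i))" if "k < n" for k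
    using herm_index[OF X pair_index_less[OF that] pair_index_less[OF that]] by blast
  then show "ptr_left n m X $$ (i,j) = cnj (ptr_left n m X $$ (j,i))"
    using \<open>i < m\<close> \<open>j < m\<close> by (simp add: ptr_left_index)
qed (rule ptr_left_carrier)

lemma psd_smult_one:
  assumes r: "0 \<le> r" shows "psd n (complex_of_real r \<cdot>\<^sub>m 1\<^sub>m n)"
  unfolding psd_def
proof (intro conjI ballI)
  show "herm n (complex_of_real r \<cdot>\<^sub>m 1\<^sub>m n)" by (rule hermI) auto
  fix v :: "complex vec" assume v: "v \<in> carrier_vec n"
  have "(complex_of_real r \<cdot>\<^sub>m 1\<^sub>m n) *\<^sub>v v = complex_of_real r \<cdot>\<^sub>v v"
    by (rule eq_vecI) (use v in \<open>simp_all add: mult_mat_vec_index[of _ n n] if_distrib[of "\<lambda>x. x * _"] cong: if_cong\<close>)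
  moreover have "0 \<le> Re (conjugate v \<bullet> v)"
    using conjugate_square_ge_0_vec[of v] conjugate_vec_sprod_comm[OF v v] by (simp add: less_eq_complex_def)
  ultimately show "0 \<le> Re (conjugate v \<bullet> ((complex_of_real r \<cdot>\<^sub>m 1\<^sub>m n) *\<^sub>v v))"
    using v r by simp
qed

lemma mtrace_add: "X \<in> carrier_mat n n \<Longrightarrow> Y \<in> carrier_mat n n \<Longrightarrow> mtrace (X + Y) = mtrace X + mtrace Y"
  by (simp add: mtrace_carrier[of _ n] sum.distrib)

lemma mtrace_smult: "X \<in> carrier_mat n n \<Longrightarrow> mtrace (c \<cdot>\<^sub>m X) = c * mtrace X"
  by (simp add: mtrace_carrier[of _ n] sum_distrib_left)

lemma hs_inner_add_left:
  assumes A: "A \<in> carrier_mat D D" and B: "B \<in> carrier_mat D D" and C: "C \<in> carrier_mat D D"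
  shows "hs_inner (A + B) C = hs_inner A C + hs_inner B C"
  unfolding hs_inner_def using assms by (simp add: add_mult_distrib_mat[OF A B C] mtrace_add[of _ D])

lemma hs_inner_smult_left:
  assumes A: "A \<in> carrier_mat D D" and C: "C \<in> carrier_mat D D"
  shows "hs_inner (complex_of_real r \<cdot>\<^sub>m A) C = r * hs_inner A C"
  unfolding hs_inner_def using assms by (simp add: mult_smult_assoc_mat[OF A C] mtrace_smult[of _ D])

lemma hs_inner_lincomb:
  assumes A: "A \<in> carrier_mat D D" and B: "B \<in> carrier_mat D D" and C: "C \<in> carrier_mat D D"
  shows "hs_inner (complex_of_real u \<cdot>\<^sub>m A + complex_of_real v \<cdot>\<^sub>m B) C = u * hs_inner A C + v * hs_inner B C"
proof -
  have "hs_inner (complex_of_real u \<cdot>\<^sub>m A + complex_of_real v \<cdot>\<^sub>m B) C =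
      hs_inner (complex_of_real u \<cdot>\<^sub>m A) C + hs_inner (complex_of_real v \<cdot>\<^sub>m B) C"
    by (rule hs_inner_add_left) (use A B C in simp_all)
  then show ?thesis by (simp only: hs_inner_smult_left[OF A C] hs_inner_smult_left[OF B C])
qed

lemma hs_inner_zero_left: "C \<in> carrier_mat D D \<Longrightarrow> hs_inner (0\<^sub>m D D) C = 0"
  unfolding hs_inner_def by (simp add: mtrace_carrier[of _ D])

lemma hs_inner_formula:
  assumes X: "X \<in> carrier_mat D D" and Y: "Y \<in> carrier_mat D D"
  shows "hs_inner X Y = Re (\<Sum>i<D. \<Sum>k<D. X $$ (i,k) * Y $$ (k,i))"
proof -
  have XY: "X * Y \<in> carrier_mat D D" using X Y by simp
  show ?thesis unfolding hs_inner_def mtrace_carrier[OF XY] using mult_mat_index[OF X Y] by simp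
qed

section \<open>Schur's lemma for projective (anti-)unitary representations\<close>

lemma unitary_mat_carrier: "unitary_mat n V \<Longrightarrow> V \<in> carrier_mat n n"
  unfolding unitary_mat_def by simp

lemma conjugate_mult_mat_vec:
  assumes A: "A \<in> carrier_mat n n" and w: "w \<in> carrier_vec n"
  shows "map_mat cnj A *\<^sub>v conjugate w = conjugate (A *\<^sub>v w)"
proof (rule eq_vecI)
  fix i assume "i < dim_vec (conjugate (A *\<^sub>v w))"
  then have i: "i < n" using A by simp
  then show "(map_mat cnj A *\<^sub>v conjugate w) $ i = conjugate (A *\<^sub>v w) $ i"
    using A w mult_mat_vec_index[of "map_mat cnj A" n n "conjugate w" i] mult_mat_vec_index[OF A w i]
    by simp
qed (use A w in simp)

lemma herm_eigenvalue_real: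
  assumes E: "herm n E" and v: "v \<in> carrier_vec n" "v \<noteq> 0\<^sub>v n" and ev: "E *\<^sub>v v = l \<cdot>\<^sub>v v"
  shows "cnj l = l"
proof -
  have Ec: "E \<in> carrier_mat n n" using herm_carrier[OF E] .
  define q where "q = (\<Sum>i<n. \<Sum>j<n. cnj (v$i) * E $$ (i,j) * v$j)"
  define r where "r = (\<Sum>i<n. of_real ((cmod (v$i))\<^sup>2) :: complex)"
  have "q = (\<Sum>i<n. cnj (v$i) * (E *\<^sub>v v) $ i)"
    unfolding q_def using mult_mat_vec_index[OF Ec v(1)] by (simp add: sum_distrib_left mult.assoc)
  also have "\<dots> = l * r"
    unfolding r_def ev using v(1)
    by (simp add: sum_distrib_left ac_simps complex_norm_square[symmetric] del: of_real_power)
  finally have q_lr: "q = l * r" .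
  have "cnj q = (\<Sum>i<n. \<Sum>j<n. v$i * cnj (E $$ (i,j)) * cnj (v$j))"
    unfolding q_def by simp
  also have "\<dots> = (\<Sum>i<n. \<Sum>j<n. v$i * E $$ (j,i) * cnj (v$j))"
    using herm_index[OF E] by (intro sum.cong refl) (metis lessThan_iff)
  also have "\<dots> = q" unfolding q_def by (subst sum.swap) (simp add: ac_simps)
  finally have q_real: "cnj q = q" .
  obtain i where i: "i < n" "v $ i \<noteq> 0" using v by (metis eq_vecI carrier_vecD index_zero_vec(1,2))
  have "(\<Sum>i<n. (cmod (v$i))\<^sup>2) > 0" by (rule sum_pos2[of _ i]) (use i in auto)
  then have r: "r \<noteq> 0" "cnj r = r" unfolding r_def of_real_sum[symmetric] by (simp_all del: of_real_sum)
  have "cnj l * r = l * r" using q_lr q_real r(2) by (metis complex_cnj_mult)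
  then show ?thesis using r(1) by simp
qed

lemma eigenspace_is_subspace:
  assumes E: "E \<in> carrier_mat n n"
  shows "is_subspace n {w \<in> carrier_vec n. E *\<^sub>v w = l \<cdot>\<^sub>v w}"
  unfolding is_subspace_def
  using E by (auto simp: mult_add_distrib_mat_vec[OF E] smult_add_distrib_vec[of _ n]
      mult_mat_vec[OF E] smult_smult_assoc mult.commute)

lemma eq_smult_one_if_eigenvector_all:
  fixes E :: "'a::comm_ring_1 mat"
  assumes E: "E \<in> carrier_mat n n" and all: "\<And>w. w \<in> carrier_vec n \<Longrightarrow> E *\<^sub>v w = l \<cdot>\<^sub>v w"
  shows "E = l \<cdot>\<^sub>m 1\<^sub>m n"
proof (rule eq_matI)
  fix i j assume "i < dim_row (l \<cdot>\<^sub>m 1\<^sub>m n)" "j < dim_col (l \<cdot>\<^sub>m 1\<^sub>m n)"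
  then have i: "i < n" and j: "j < n" by auto
  have "E $$ (i,j) = (E *\<^sub>v unit_vec n j) $ i"
    using mult_mat_vec_index[OF E unit_vec_carrier i, of j] j by (simp add: if_distrib cong: if_cong)
  also have "\<dots> = (l \<cdot>\<^sub>m 1\<^sub>m n) $$ (i,j)" using all[OF unit_vec_carrier] i j by simp
  finally show "E $$ (i,j) = (l \<cdot>\<^sub>m 1\<^sub>m n) $$ (i,j)" .
qed (use E in auto)

text \<open>For anti-unitary \<open>U\<close> this needs the eigenvalue to be real.\<close>
lemma op_apply_eigenvector:
  assumes V: "unitary_mat n (fst U)" and E: "herm n E" and inv: "Ad U E = E"
    and w: "w \<in> carrier_vec n" and ev: "E *\<^sub>v w = l \<cdot>\<^sub>v w" and real: "cnj l = l"
  shows "E *\<^sub>v op_apply U w = l \<cdot>\<^sub>v op_apply U w"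
proof -
  define X where "X = (if snd U then map_mat cnj E else E)"
  define x where "x = (if snd U then conjugate w else w)"
  have Vc: "fst U \<in> carrier_mat n n" using unitary_mat_carrier[OF V] .
  have Ec: "E \<in> carrier_mat n n" using herm_carrier[OF E] .
  have Xc: "X \<in> carrier_mat n n" and xc: "x \<in> carrier_vec n" using Ec w by (auto simp: X_def x_def)
  have "E * fst U = fst U * X * mat_adjoint (fst U) * fst U"
    using inv unfolding Ad_def X_def by simp
  also have "\<dots> = fst U * X"
    using V Vc Xc by (simp add: assoc_mult_mat[of _ n n _ n _ n] mat_adjoint_carrier unitary_mat_def)
  finally have EV: "E * fst U = fst U * X" .
  have Xx: "X *\<^sub>v x = l \<cdot>\<^sub>v x"
    using ev real conjugate_mult_mat_vec[OF Ec w] by (simp add: X_def x_def conjugate_smult_vec)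
  have "E *\<^sub>v (fst U *\<^sub>v x) = fst U *\<^sub>v (X *\<^sub>v x)"
    using Ec Vc Xc xc by (simp flip: assoc_mult_mat_vec add: EV)
  then show ?thesis
    unfolding op_apply_def x_def[symmetric] Xx using mult_mat_vec[OF Vc xc] by simp
qed

lemma schur_herm_scalar:
  assumes n: "n > 0" and E: "herm n E"
    and unitary: "\<forall>h\<in>H. unitary_mat n (fst (U h))" and inv: "\<forall>h\<in>H. Ad (U h) E = E"
    and irr: "irreducible_rep H n U"
  shows "\<exists>l. E = l \<cdot>\<^sub>m 1\<^sub>m n"
proof -
  have Ec: "E \<in> carrier_mat n n" using herm_carrier[OF E] .
  obtain l where "eigenvalue E l" using spectrum_non_empty[OF Ec n] unfolding spectrum_def by auto
  then obtain v where v: "v \<in> carrier_vec n" "v \<noteq> 0\<^sub>v n" "E *\<^sub>v v = l \<cdot>\<^sub>v v"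
    unfolding eigenvalue_def eigenvector_def using Ec by auto
  define S where "S = {w \<in> carrier_vec n. E *\<^sub>v w = l \<cdot>\<^sub>v w}"
  have real: "cnj l = l" by (rule herm_eigenvalue_real[OF E v])
  have "op_apply (U h) w \<in> S" if h: "h \<in> H" and w: "w \<in> S" for h w
  proof -
    have "fst (U h) \<in> carrier_mat n n" using unitary h unitary_mat_carrier by blast
    then have "op_apply (U h) w \<in> carrier_vec n" using w by (simp add: S_def op_apply_def)
    then show ?thesis
      using op_apply_eigenvector[OF _ E _ _ _ real] unitary inv h w by (simp add: S_def)
  qed
  then have "S = {0\<^sub>v n} \<or> S = carrier_vec n"
    using irr eigenspace_is_subspace[OF Ec] unfolding irreducible_rep_def S_def by auto
  then have "S = carrier_vec n" using v unfolding S_def by auto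
  then show ?thesis using eq_smult_one_if_eigenvector_all[OF Ec] unfolding S_def by blast
qed

section \<open>Operators on a bipartite space\<close>

definition slice_left :: "nat \<Rightarrow> nat \<Rightarrow> nat \<Rightarrow> nat \<Rightarrow> complex mat \<Rightarrow> complex mat" where
  "slice_left n m p q Y = mat n n (\<lambda>(a,b). Y $$ (a*m+p, b*m+q))"

lemma slice_left_carrier [simp]: "slice_left n m p q Y \<in> carrier_mat n n"
  unfolding slice_left_def by simp

lemma slice_left_dim [simp]: "dim_row (slice_left n m p q Y) = n" "dim_col (slice_left n m p q Y) = n"
  unfolding slice_left_def by simp_all

lemma slice_left_index [simp]: "a < n \<Longrightarrow> b < n \<Longrightarrow> slice_left n m p q Y $$ (a,b) = Y $$ (a*m+p, b*m+q)"
  unfolding slice_left_def by simp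

lemma slice_left_ptranspose_left:
  "p < m \<Longrightarrow> q < m \<Longrightarrow> slice_left n m p q (ptranspose_left n m Y) = transpose_mat (slice_left n m p q Y)"
proof (rule eq_matI)
  fix a b assume "p < m" "q < m" "a < dim_row (transpose_mat (slice_left n m p q Y))"
    "b < dim_col (transpose_mat (slice_left n m p q Y))"
  then show "slice_left n m p q (ptranspose_left n m Y) $$ (a,b) = transpose_mat (slice_left n m p q Y) $$ (a,b)"
    by (simp add: ptranspose_left_def pair_index_less)
qed simp_all

lemma kron_one_right_index:
  "V \<in> carrier_mat n n \<Longrightarrow> a < n \<Longrightarrow> c < n \<Longrightarrow> p < m \<Longrightarrow> k < m \<Longrightarrow>
   kron V (1\<^sub>m m) $$ (a*m+p, c*m+k) = (if p = k then V $$ (a,c) else 0)"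
  by (simp add: kron_pair_index)

lemma kron_one_right_mult_index:
  assumes V: "V \<in> carrier_mat n n" and Z: "Z \<in> carrier_mat (n*m) x" and a: "a < n" and p: "p < m" and j: "j < x"
  shows "(kron V (1\<^sub>m m) * Z) $$ (a*m+p, j) = (\<Sum>c<n. V $$ (a,c) * Z $$ (c*m+p, j))"
proof -
  have "(kron V (1\<^sub>m m) * Z) $$ (a*m+p, j) =
      (\<Sum>c<n. \<Sum>k<m. (if p = k then V $$ (a,c) else 0) * Z $$ (c*m+k, j))"
    using mult_mat_index[OF kron_carrier[OF V one_carrier_mat] Z pair_index_less[OF a p] j]
    by (simp add: a p sum_lessThan_mult kron_one_right_index[OF V])
  then show ?thesis using p by (simp add: if_distrib[of "\<lambda>u. u * _"] cong: if_cong)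
qed

lemma slice_left_kron_sandwich:
  assumes V: "V \<in> carrier_mat n n" and Z: "Z \<in> carrier_mat (n*m) (n*m)" and p: "p < m" and q: "q < m"
  shows "slice_left n m p q (kron V (1\<^sub>m m) * Z * mat_adjoint (kron V (1\<^sub>m m))) =
         V * slice_left n m p q Z * mat_adjoint V"
proof (rule eq_matI)
  fix a b assume "a < dim_row (V * slice_left n m p q Z * mat_adjoint V)"
    "b < dim_col (V * slice_left n m p q Z * mat_adjoint V)"
  then have a: "a < n" and b: "b < n" using V mat_adjoint_carrier[OF V] by auto
  have W: "kron V (1\<^sub>m m) \<in> carrier_mat (n*m) (n*m)" using kron_carrier[OF V one_carrier_mat] .
  have WZ: "kron V (1\<^sub>m m) * Z \<in> carrier_mat (n*m) (n*m)" using W Z by simp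
  have "(kron V (1\<^sub>m m) * Z * mat_adjoint (kron V (1\<^sub>m m))) $$ (a*m+p, b*m+q) =
    (\<Sum>d<n. \<Sum>l<m. (\<Sum>c<n. V $$ (a,c) * Z $$ (c*m+p, d*m+l)) * cnj (if q = l then V $$ (b,d) else 0))"
    using a b p q
    by (simp add: mult_mat_index[OF WZ mat_adjoint_carrier[OF W]] mat_adjoint_index[OF W] pair_index_less
        sum_lessThan_mult kron_one_right_index[OF V] kron_one_right_mult_index[OF V Z])
  also have "\<dots> = (\<Sum>d<n. \<Sum>c<n. V $$ (a,c) * Z $$ (c*m+p, d*m+q) * cnj (V $$ (b,d)))"
    using q by (simp add: if_distrib[of cnj] if_distrib[of "\<lambda>u. _ * u"] sum_distrib_right cong: if_cong)
  also have "\<dots> = (V * slice_left n m p q Z * mat_adjoint V) $$ (a,b)"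
    using a b by (simp add: sandwich_index[OF V]) (rule sum.swap)
  finally show "slice_left n m p q (kron V (1\<^sub>m m) * Z * mat_adjoint (kron V (1\<^sub>m m))) $$ (a,b) =
    (V * slice_left n m p q Z * mat_adjoint V) $$ (a,b)" using a b by simp
qed (use V mat_adjoint_carrier[OF V] in auto)

lemma sandwich_lincomb:
  assumes V: "V \<in> carrier_mat n n" and W: "W \<in> carrier_mat n n"
    and X: "X \<in> carrier_mat n n" and Y: "Y \<in> carrier_mat n n"
  shows "V * (c \<cdot>\<^sub>m X + d \<cdot>\<^sub>m Y) * W = (c \<cdot>\<^sub>m (V * X * W) + d \<cdot>\<^sub>m (V * Y * W) :: complex mat)"
proof -
  have "V * (c \<cdot>\<^sub>m X + d \<cdot>\<^sub>m Y) = V * (c \<cdot>\<^sub>m X) + V * (d \<cdot>\<^sub>m Y)"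
    by (rule mult_add_distrib_mat) (use assms in auto)
  also have "\<dots> = c \<cdot>\<^sub>m (V * X) + d \<cdot>\<^sub>m (V * Y)"
    by (simp add: mult_smult_distrib[OF V X] mult_smult_distrib[OF V Y])
  finally have "V * (c \<cdot>\<^sub>m X + d \<cdot>\<^sub>m Y) * W = (c \<cdot>\<^sub>m (V * X) + d \<cdot>\<^sub>m (V * Y)) * W" by simp
  also have "\<dots> = c \<cdot>\<^sub>m (V * X) * W + d \<cdot>\<^sub>m (V * Y) * W"
    by (rule add_mult_distrib_mat) (use assms in auto)
  also have "\<dots> = c \<cdot>\<^sub>m (V * X * W) + d \<cdot>\<^sub>m (V * Y * W)"
    using assms by (simp add: mult_smult_assoc_mat[of _ n n W n])
  finally show ?thesis .
qed

lemma transpose_lincomb: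
  "X \<in> carrier_mat n n \<Longrightarrow> Y \<in> carrier_mat n n \<Longrightarrow>
   transpose_mat (c \<cdot>\<^sub>m X + d \<cdot>\<^sub>m Y) = c \<cdot>\<^sub>m transpose_mat X + d \<cdot>\<^sub>m transpose_mat Y"
  by (rule eq_matI) auto

lemma slice_left_Ad_tensor_id:
  assumes V: "fst U \<in> carrier_mat n n" and Y: "Y \<in> carrier_mat (n*m) (n*m)" and p: "p < m" and q: "q < m"
  shows "slice_left n m p q (Ad_tensor_id U n m Y) =
    fst U * (if snd U then transpose_mat (slice_left n m p q Y) else slice_left n m p q Y) * mat_adjoint (fst U)"
proof -
  have "ptranspose_left n m Y \<in> carrier_mat (n*m) (n*m)" by (simp add: ptranspose_left_def)
  then show ?thesis
    using slice_left_kron_sandwich[OF V _ p q] Y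
    by (simp add: Ad_tensor_id_def slice_left_ptranspose_left[OF p q])
qed

text \<open>A Hermitian operator invariant under \<open>Ad_U \<otimes> id\<close> has scalar slices: Schur's lemma applies to
  the Hermitian combinations \<open>c B + cnj c B\<^sup>\<dagger>\<close> of a slice \<open>B\<close>, and \<open>B\<close> is recovered from those with \<open>c = 1, \<i>\<close>.\<close>
lemma slice_left_scalar_if_invariant:
  assumes n: "n > 0" and Y: "herm (n*m) Y"
    and unitary: "\<forall>h\<in>H. unitary_mat n (fst (U h))" and inv: "\<forall>h\<in>H. Ad_tensor_id (U h) n m Y = Y"
    and irr: "irreducible_rep H n U" and p: "p < m" and q: "q < m"
  shows "\<exists>z. slice_left n m p q Y = z \<cdot>\<^sub>m 1\<^sub>m n"
proof -
  define B where "B = slice_left n m p q Y"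
  define B' where "B' = slice_left n m q p Y"
  define E where "E c = c \<cdot>\<^sub>m B + cnj c \<cdot>\<^sub>m B'" for c
  have Bc: "B \<in> carrier_mat n n" "B' \<in> carrier_mat n n" by (simp_all add: B_def B'_def)
  have herm_E: "herm n (E c)" for c
  proof (rule hermI)
    fix a b assume "a < n" "b < n"
    then show "E c $$ (a,b) = cnj (E c $$ (b,a))"
      using herm_index[OF Y pair_index_less[OF \<open>a < n\<close> p] pair_index_less[OF \<open>b < n\<close> q]]
        herm_index[OF Y pair_index_less[OF \<open>a < n\<close> q] pair_index_less[OF \<open>b < n\<close> p]]
      by (simp add: E_def B_def B'_def)
  qed (simp add: E_def B_def B'_def)
  have inv_E: "Ad (U h) (E c) = E c" if h: "h \<in> H" for h c
  proof -
    define tr where "tr X = (if snd (U h) then transpose_mat X else X)" for X :: "complex mat"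
    have V: "fst (U h) \<in> carrier_mat n n" using unitary h unitary_mat_carrier by blast
    have tr_c: "tr X \<in> carrier_mat n n" if "X \<in> carrier_mat n n" for X using that by (simp add: tr_def)
    have "fst (U h) * tr B * mat_adjoint (fst (U h)) = B" "fst (U h) * tr B' * mat_adjoint (fst (U h)) = B'"
      using slice_left_Ad_tensor_id[OF V herm_carrier[OF Y]] inv h p q
      by (simp_all add: tr_def B_def B'_def)
    moreover have "Ad (U h) (E c) = fst (U h) * tr (E c) * mat_adjoint (fst (U h))"
      using herm_cnj_eq_transpose[OF herm_E] by (simp add: Ad_def tr_def)
    moreover have "tr (E c) = c \<cdot>\<^sub>m tr B + cnj c \<cdot>\<^sub>m tr B'"
      using Bc by (simp add: tr_def E_def transpose_lincomb)
    ultimately show ?thesis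
      using sandwich_lincomb[OF V mat_adjoint_carrier[OF V] tr_c tr_c] Bc by (simp add: E_def)
  qed
  obtain \<alpha> where \<alpha>: "E 1 = \<alpha> \<cdot>\<^sub>m 1\<^sub>m n" using schur_herm_scalar[OF n herm_E unitary _ irr] inv_E by blast
  obtain \<beta> where \<beta>: "E \<i> = \<beta> \<cdot>\<^sub>m 1\<^sub>m n" using schur_herm_scalar[OF n herm_E unitary _ irr] inv_E by blast
  have "B = ((\<alpha> - \<i> * \<beta>) / 2) \<cdot>\<^sub>m 1\<^sub>m n"
  proof (rule eq_matI)
    fix a b assume "a < dim_row (((\<alpha> - \<i> * \<beta>) / 2) \<cdot>\<^sub>m 1\<^sub>m n)" "b < dim_col (((\<alpha> - \<i> * \<beta>) / 2) \<cdot>\<^sub>m 1\<^sub>m n)"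
    then have "a < n" "b < n" by auto
    then have "2 * B $$ (a,b) = E 1 $$ (a,b) - \<i> * E \<i> $$ (a,b)"
      using Bc by (simp add: E_def algebra_simps)
    then show "B $$ (a,b) = (((\<alpha> - \<i> * \<beta>) / 2) \<cdot>\<^sub>m 1\<^sub>m n) $$ (a,b)"
      using \<open>a < n\<close> \<open>b < n\<close> by (simp add: \<alpha> \<beta> field_simps)
  qed (simp_all add: B_def)
  then show ?thesis unfolding B_def by blast
qed

lemma eq_smult_one_if_slices_scalar:
  assumes X: "X \<in> carrier_mat (n*m) (n*m)" and n: "n > 0"
    and slices: "\<forall>p<m. \<forall>q<m. \<exists>z. slice_left n m p q X = z \<cdot>\<^sub>m 1\<^sub>m n"
    and ptr: "ptr_left n m X = w \<cdot>\<^sub>m 1\<^sub>m m"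
  shows "X = (w / of_nat n) \<cdot>\<^sub>m 1\<^sub>m (n*m)"
proof -
  have entry: "X $$ (a*m+p, b*m+q) = (if a = b \<and> p = q then w / of_nat n else 0)"
    if a: "a < n" and b: "b < n" and p: "p < m" and q: "q < m" for a b p q
  proof -
    obtain z where z: "slice_left n m p q X = z \<cdot>\<^sub>m 1\<^sub>m n" using slices p q by blast
    have blk: "X $$ (c*m+p, d*m+q) = (if c = d then z else 0)" if "c < n" "d < n" for c d
      using arg_cong[OF z, of "\<lambda>A. A $$ (c,d)"] that by simp
    have "of_nat n * z = (if p = q then w else 0)"
      using arg_cong[OF ptr, of "\<lambda>A. A $$ (p,q)"] p q by (simp add: ptr_left_index blk)
    then have "z = (if p = q then w / of_nat n else 0)" using n by (auto simp: field_simps)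
    then show ?thesis using blk[OF a b] by simp
  qed
  show ?thesis
  proof (rule eq_matI)
    fix i j assume "i < dim_row ((w / of_nat n) \<cdot>\<^sub>m 1\<^sub>m (n*m))" "j < dim_col ((w / of_nat n) \<cdot>\<^sub>m 1\<^sub>m (n*m))"
    then have i: "i < n*m" and j: "j < n*m" by auto
    obtain a p where ia: "i = a*m+p" "a < n" "p < m" using pair_index_cases[OF i] .
    obtain b q where jb: "j = b*m+q" "b < n" "q < m" using pair_index_cases[OF j] .
    show "X $$ (i,j) = ((w / of_nat n) \<cdot>\<^sub>m 1\<^sub>m (n*m)) $$ (i,j)"
      using i j entry[OF ia(2) jb(2) ia(3) jb(3)] pair_index_eq_iff[OF ia(3) jb(3)] unfolding ia(1) jb(1)
      by simp
  qed (use X in auto)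
qed

section \<open>The set \<open>S\<^sub>G\<close>\<close>

lemma Rdim_0 [simp]: "Rdim dV dW 0 = 1"
  unfolding Rdim_def by simp

lemma Rdim_Suc: "Rdim dV dW (Suc t) = dW (Suc t) * (dV (Suc t) * Rdim dV dW t)"
  unfolding Rdim_def by (simp add: prod.nat_ivl_Suc' ac_simps)

lemma Rdim_pred: "1 \<le> t \<Longrightarrow> Rdim dV dW t = dW t * (dV t * Rdim dV dW (t-1))"
  using Rdim_Suc[of dV dW "t-1"] by simp

lemma Qdim_self [simp]: "Qdim T dV dW T = 1"
  unfolding Qdim_def by simp

lemma Qdim_Suc: "t < T \<Longrightarrow> Qdim T dV dW t = Qdim T dV dW (Suc t) * (dW (Suc t) * dV (Suc t))"
  unfolding Qdim_def by (simp add: prod.atLeast_Suc_atMost mult.commute)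

lemma Rdim_split:
  assumes "1 \<le> t" "t \<le> T"
  shows "Rdim dV dW T = (Qdim T dV dW t * dW t) * (dV t * Rdim dV dW (t-1))"
  using assms(2)
proof (induction "T - t" arbitrary: T)
  case 0
  then show ?case using Rdim_pred[OF assms(1)] by simp
next
  case (Suc k)
  then obtain T' where T': "T = Suc T'" "t \<le> T'" by (cases T) auto
  then have "Rdim dV dW T' = (Qdim T' dV dW t * dW t) * (dV t * Rdim dV dW (t-1))" using Suc by simp
  moreover have "Qdim T dV dW t = dW T * dV T * Qdim T' dV dW t"
    unfolding Qdim_def T'(1) using T'(2) by (simp add: prod.nat_ivl_Suc')
  ultimately show ?case unfolding T'(1) Rdim_Suc by (simp add: ac_simps)
qed

text \<open>The partial trace over \<open>W\<^sub>T \<otimes> V\<^sub>T \<otimes> \<dots> \<otimes> V\<^sub>t\<^sub>+\<^sub>1 \<otimes> W\<^sub>t\<close>, leaving an operator on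
  \<open>V\<^sub>t \<otimes> W\<^sub>t\<^sub>-\<^sub>1 \<otimes> \<dots> \<otimes> V\<^sub>1\<close>.\<close>
definition marginal :: "nat \<Rightarrow> (nat \<Rightarrow> nat) \<Rightarrow> (nat \<Rightarrow> nat) \<Rightarrow> nat \<Rightarrow> complex mat \<Rightarrow> complex mat" where
  "marginal T dV dW t X = ptr_left (Qdim T dV dW t * dW t) (dV t * Rdim dV dW (t-1)) X"

lemma marginal_self: "marginal T dV dW T X = ptr_left (dW T) (dV T * Rdim dV dW (T-1)) X"
  unfolding marginal_def by simp

lemma marginal_step:
  assumes "1 \<le> t" "t < T"
  shows "marginal T dV dW t X =
    ptr_left (dW t) (dV t * Rdim dV dW (t-1)) (ptr_left (dV (Suc t)) (Rdim dV dW t) (marginal T dV dW (Suc t) X))"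
proof -
  define Q where "Q = Qdim T dV dW (Suc t) * dW (Suc t)"
  have Q: "Qdim T dV dW t * dW t = (Q * dV (Suc t)) * dW t"
    using Qdim_Suc[OF assms(2), of dV dW] by (simp add: Q_def ac_simps)
  have "marginal T dV dW t X = ptr_left ((Q * dV (Suc t)) * dW t) (dV t * Rdim dV dW (t-1)) X"
    unfolding marginal_def Q ..
  also have "\<dots> = ptr_left (dW t) (dV t * Rdim dV dW (t-1)) (ptr_left (Q * dV (Suc t)) (Rdim dV dW t) X)"
    unfolding Rdim_pred[OF assms(1)] by (rule ptr_left_mult)
  also have "ptr_left (Q * dV (Suc t)) (Rdim dV dW t) X =
      ptr_left (dV (Suc t)) (Rdim dV dW t) (marginal T dV dW (Suc t) X)"
    unfolding marginal_def Q_def by (simp only: diff_Suc_1 ptr_left_mult)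
  finally show ?thesis .
qed

lemma marginal_kron_one:
  assumes tau: "\<forall>t\<in>{1..T}. \<tau> t \<in> carrier_mat (dV t * Rdim dV dW (t-1)) (dV t * Rdim dV dW (t-1))"
    and tr: "\<forall>t\<in>{2..T}. ptr_left (dV t) (Rdim dV dW (t-1)) (\<tau> t) = kron (1\<^sub>m (dW (t-1))) (\<tau> (t-1))"
    and t: "1 \<le> t" "t \<le> T"
  shows "marginal T dV dW t (kron (1\<^sub>m (dW T)) (\<tau> T)) = of_nat (\<Prod>s\<in>{t..T}. dW s) \<cdot>\<^sub>m \<tau> t"
  using t
proof (induction "T - t" arbitrary: t)
  case 0
  then have "t = T" by simp
  then show ?case using tau 0 by (simp add: marginal_self ptr_left_kron_one)
next
  case (Suc k)
  then have tT: "t < T" by simp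
  define c :: complex where "c = of_nat (\<Prod>s\<in>{Suc t..T}. dW s)"
  have IH: "marginal T dV dW (Suc t) (kron (1\<^sub>m (dW T)) (\<tau> T)) = c \<cdot>\<^sub>m \<tau> (Suc t)"
    using Suc tT unfolding c_def by simp
  have tau_Suc: "\<tau> (Suc t) \<in> carrier_mat (dV (Suc t) * Rdim dV dW t) (dV (Suc t) * Rdim dV dW t)"
    using bspec[OF tau, of "Suc t"] tT by simp
  have tau_t: "\<tau> t \<in> carrier_mat (dV t * Rdim dV dW (t-1)) (dV t * Rdim dV dW (t-1))"
    using tau Suc tT by simp
  have "ptr_left (dV (Suc t)) (Rdim dV dW t) (\<tau> (Suc t)) = kron (1\<^sub>m (dW t)) (\<tau> t)"
    using bspec[OF tr, of "Suc t"] Suc(3) tT by simp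
  then have "marginal T dV dW t (kron (1\<^sub>m (dW T)) (\<tau> T)) =
      ptr_left (dW t) (dV t * Rdim dV dW (t-1)) (c \<cdot>\<^sub>m kron (1\<^sub>m (dW t)) (\<tau> t))"
    using marginal_step[OF Suc(3) tT] IH by (simp add: ptr_left_smult[OF tau_Suc])
  also have "\<dots> = c \<cdot>\<^sub>m (of_nat (dW t) \<cdot>\<^sub>m \<tau> t)"
    unfolding ptr_left_smult[OF kron_carrier[OF one_carrier_mat tau_t]] ptr_left_kron_one[OF tau_t] ..
  moreover have "(\<Prod>s\<in>{t..T}. dW s) = dW t * (\<Prod>s\<in>{Suc t..T}. dW s)"
    using tT by (simp add: prod.atLeast_Suc_atMost)
  ultimately show ?case by (simp add: c_def smult_smult_mat mult.commute)
qed

lemma S_G_components_maximally_mixed: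
  assumes tau: "\<forall>t\<in>{1..T}. \<tau> t \<in> carrier_mat (dV t * Rdim dV dW (t-1)) (dV t * Rdim dV dW (t-1))"
    and tr1: "mtrace (\<tau> 1) = 1"
    and tr: "\<forall>t\<in>{2..T}. ptr_left (dV t) (Rdim dV dW (t-1)) (\<tau> t) = kron (1\<^sub>m (dW (t-1))) (\<tau> (t-1))"
    and dV: "\<forall>t\<in>{1..T}. 0 < dV t"
    and slices: "\<forall>t\<in>{1..T}. \<forall>p<Rdim dV dW (t-1). \<forall>q<Rdim dV dW (t-1).
       \<exists>z. slice_left (dV t) (Rdim dV dW (t-1)) p q (\<tau> t) = z \<cdot>\<^sub>m 1\<^sub>m (dV t)"
    and t: "1 \<le> t" "t \<le> T"
  shows "\<tau> t = (1 / of_nat (\<Prod>s\<in>{1..t}. dV s)) \<cdot>\<^sub>m 1\<^sub>m (dV t * Rdim dV dW (t-1))"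
  using t
proof (induction t)
  case 0
  then show ?case by simp
next
  case (Suc t)
  have ptr: "ptr_left (dV (Suc t)) (Rdim dV dW t) (\<tau> (Suc t)) =
      (1 / of_nat (\<Prod>s\<in>{1..t}. dV s)) \<cdot>\<^sub>m 1\<^sub>m (Rdim dV dW t)"
  proof (cases "t = 0")
    case True
    have "\<tau> 1 \<in> carrier_mat (dV 1) (dV 1)" using bspec[OF tau, of 1] Suc.prems by simp
    then show ?thesis using True tr1 ptr_left_one by simp
  next
    case False
    then have "ptr_left (dV (Suc t)) (Rdim dV dW t) (\<tau> (Suc t)) = kron (1\<^sub>m (dW t)) (\<tau> t)"
      using bspec[OF tr, of "Suc t"] False Suc.prems by simp
    also have "\<dots> = (1 / of_nat (\<Prod>s\<in>{1..t}. dV s)) \<cdot>\<^sub>m 1\<^sub>m (Rdim dV dW t)"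
      using Suc False Rdim_Suc[of dV dW "t-1"] by (simp add: kron_one_smult_one)
    finally show ?thesis .
  qed
  have "\<tau> (Suc t) = ((1 / of_nat (\<Prod>s\<in>{1..t}. dV s)) / of_nat (dV (Suc t))) \<cdot>\<^sub>m 1\<^sub>m (dV (Suc t) * Rdim dV dW t)"
    using Suc.prems bspec[OF tau, of "Suc t"] bspec[OF dV, of "Suc t"] bspec[OF slices, of "Suc t"]
    by (intro eq_smult_one_if_slices_scalar[OF _ _ _ ptr]) auto
  then show ?case by (simp add: prod.nat_ivl_Suc' field_simps)
qed

lemma S_G_eq_maximally_mixed:
  assumes dims: "\<forall>t\<in>{1..T}. 1 \<le> dV t \<and> 1 \<le> dW t" and T1: "1 \<le> T" and \<sigma>: "\<sigma> \<in> S_G T dV dW"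
    and slices: "\<forall>t\<in>{1..T}. \<forall>p<Rdim dV dW (t-1). \<forall>q<Rdim dV dW (t-1).
       \<exists>z. slice_left (dV t) (Rdim dV dW (t-1)) p q (marginal T dV dW t \<sigma>) = z \<cdot>\<^sub>m 1\<^sub>m (dV t)"
  shows "\<sigma> = (1 / of_nat (\<Prod>t\<in>{1..T}. dV t)) \<cdot>\<^sub>m 1\<^sub>m (Rdim dV dW T)"
proof -
  obtain \<tau> where \<sigma>_eq: "\<sigma> = kron (1\<^sub>m (dW T)) (\<tau> T)"
    and psd: "\<forall>t\<in>{1..T}. psd (dV t * Rdim dV dW (t-1)) (\<tau> t)" and tr1: "mtrace (\<tau> 1) = 1"
    and tr: "\<forall>t\<in>{2..T}. ptr_left (dV t) (Rdim dV dW (t-1)) (\<tau> t) = kron (1\<^sub>m (dW (t-1))) (\<tau> (t-1))"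
    using \<sigma> unfolding S_G_def by blast
  have tau: "\<forall>t\<in>{1..T}. \<tau> t \<in> carrier_mat (dV t * Rdim dV dW (t-1)) (dV t * Rdim dV dW (t-1))"
    using psd psd_herm herm_carrier by blast
  have "\<exists>z. slice_left (dV t) (Rdim dV dW (t-1)) p q (\<tau> t) = z \<cdot>\<^sub>m 1\<^sub>m (dV t)"
    if t: "t \<in> {1..T}" and p: "p < Rdim dV dW (t-1)" and q: "q < Rdim dV dW (t-1)" for t p q
  proof -
    define r :: complex where "r = of_nat (\<Prod>s\<in>{t..T}. dW s)"
    have "(\<Prod>s\<in>{t..T}. dW s) > 0"
    proof (rule prod_pos)
      fix s assume "s \<in> {t..T}"
      then have "1 \<le> dW s" using dims t by auto
      then show "0 < dW s" by simp
    qed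
    then have "r \<noteq> 0" by (simp add: r_def)
    obtain z where z: "slice_left (dV t) (Rdim dV dW (t-1)) p q (r \<cdot>\<^sub>m \<tau> t) = z \<cdot>\<^sub>m 1\<^sub>m (dV t)"
      using slices t p q marginal_kron_one[OF tau tr] unfolding \<sigma>_eq r_def by fastforce
    have "slice_left (dV t) (Rdim dV dW (t-1)) p q (\<tau> t) = (z / r) \<cdot>\<^sub>m 1\<^sub>m (dV t)"
    proof (rule eq_matI)
      fix a b assume "a < dim_row ((z / r) \<cdot>\<^sub>m 1\<^sub>m (dV t))" "b < dim_col ((z / r) \<cdot>\<^sub>m 1\<^sub>m (dV t))"
      then have "r * slice_left (dV t) (Rdim dV dW (t-1)) p q (\<tau> t) $$ (a,b) = (if a = b then z else 0)"
        using arg_cong[OF z, of "\<lambda>A. A $$ (a,b)"] bspec[OF tau t] p q by (simp add: pair_index_less)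
      then show "slice_left (dV t) (Rdim dV dW (t-1)) p q (\<tau> t) $$ (a,b) = ((z / r) \<cdot>\<^sub>m 1\<^sub>m (dV t)) $$ (a,b)"
        using \<open>r \<noteq> 0\<close> \<open>a < _\<close> \<open>b < _\<close> by (auto simp: field_simps)
    qed simp_all
    then show ?thesis by blast
  qed
  then have "\<tau> T = (1 / of_nat (\<Prod>s\<in>{1..T}. dV s)) \<cdot>\<^sub>m 1\<^sub>m (dV T * Rdim dV dW (T-1))"
    using dims T1 by (intro S_G_components_maximally_mixed[OF tau tr1 tr]) auto
  then show ?thesis unfolding \<sigma>_eq Rdim_pred[OF T1] by (simp add: kron_one_smult_one)
qed

lemma maximally_mixed_in_S_G:
  assumes T1: "1 \<le> T" and dims: "\<forall>t\<in>{1..T}. 1 \<le> dV t \<and> 1 \<le> dW t"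
  shows "(1 / of_nat (\<Prod>t\<in>{1..T}. dV t)) \<cdot>\<^sub>m 1\<^sub>m (Rdim dV dW T) \<in> S_G T dV dW"
proof -
  define \<tau> :: "nat \<Rightarrow> complex mat" where
    "\<tau> t = complex_of_real (1 / real (\<Prod>s\<in>{1..t}. dV s)) \<cdot>\<^sub>m 1\<^sub>m (dV t * Rdim dV dW (t-1))" for t
  have dV: "0 < dV t" if "t \<in> {1..T}" for t using dims that by fastforce
  have "\<forall>t\<in>{1..T}. psd (dV t * Rdim dV dW (t-1)) (\<tau> t)"
    unfolding \<tau>_def by (intro ballI psd_smult_one) (simp add: prod_nonneg)
  moreover have "mtrace (\<tau> 1) = 1" using dV T1 by (simp add: \<tau>_def mtrace_def)
  moreover have "ptr_left (dV t) (Rdim dV dW (t-1)) (\<tau> t) = kron (1\<^sub>m (dW (t-1))) (\<tau> (t-1))"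
    if t: "t \<in> {2..T}" for t
  proof -
    obtain k where k: "t = Suc k" "1 \<le> k" using t by (cases t) auto
    have "ptr_left (dV t) (Rdim dV dW k) (\<tau> t) =
        complex_of_real (real (dV t) / real (\<Prod>s\<in>{1..t}. dV s)) \<cdot>\<^sub>m 1\<^sub>m (Rdim dV dW k)"
      by (simp add: \<tau>_def k(1) ptr_left_smult_one)
    also have "\<dots> = complex_of_real (1 / real (\<Prod>s\<in>{1..k}. dV s)) \<cdot>\<^sub>m 1\<^sub>m (Rdim dV dW k)"
      using dV t k by (simp add: prod.nat_ivl_Suc')
    also have "\<dots> = kron (1\<^sub>m (dW k)) (\<tau> k)"
      using Rdim_pred[OF k(2), of dV dW] by (simp add: \<tau>_def kron_one_smult_one)
    finally show ?thesis using k by simp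
  qed
  moreover have "(1 / of_nat (\<Prod>t\<in>{1..T}. dV t)) \<cdot>\<^sub>m 1\<^sub>m (Rdim dV dW T) = kron (1\<^sub>m (dW T)) (\<tau> T)"
    unfolding \<tau>_def Rdim_pred[OF T1] by (simp add: kron_one_smult_one)
  ultimately show ?thesis unfolding S_G_def by blast
qed

lemma invariant_S_G_maximally_mixed:
  assumes T1: "1 \<le> T" and dims: "\<forall>t\<in>{1..T}. 1 \<le> dV t \<and> 1 \<le> dW t"
    and \<sigma>: "\<sigma> \<in> S_G T dV dW" "herm (Rdim dV dW T) \<sigma>"
    and inv: "\<forall>h\<in>carrier G. actH h \<sigma> = \<sigma>"
    and H_sub: "\<forall>t\<in>{1..T}. subgroup (H t) G"
    and U_rep: "\<forall>t\<in>{1..T}. proj_rep G (H t) (dV t) (U t)"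
    and U_irr: "\<forall>t\<in>{1..T}. irreducible_rep (H t) (dV t) (U t)"
    and U_cov: "\<forall>t\<in>{1..T}. \<forall>h\<in>H t. \<forall>X. herm (Rdim dV dW T) X \<longrightarrow>
        ptr_left (Qdim T dV dW t * dW t) (dV t * Rdim dV dW (t-1)) (actH h X) =
        Ad_tensor_id (U t h) (dV t) (Rdim dV dW (t-1))
          (ptr_left (Qdim T dV dW t * dW t) (dV t * Rdim dV dW (t-1)) X)"
  shows "\<sigma> = (1 / of_nat (\<Prod>t\<in>{1..T}. dV t)) \<cdot>\<^sub>m 1\<^sub>m (Rdim dV dW T)"
proof (rule S_G_eq_maximally_mixed[OF dims T1 \<sigma>(1)], intro ballI allI impI)
  fix t p q assume t: "t \<in> {1..T}" and p: "p < Rdim dV dW (t-1)" and q: "q < Rdim dV dW (t-1)"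
  have n: "0 < dV t" using dims t by fastforce
  have "herm (dV t * Rdim dV dW (t-1)) (marginal T dV dW t \<sigma>)"
    using \<sigma>(2) t Rdim_split[of t T dV dW] by (simp add: marginal_def herm_ptr_left)
  moreover have "Ad_tensor_id (U t h) (dV t) (Rdim dV dW (t-1)) (marginal T dV dW t \<sigma>) = marginal T dV dW t \<sigma>"
    if "h \<in> H t" for h
    using U_cov t that \<sigma>(2) inv subgroup.subset[OF bspec[OF H_sub t]] by (force simp: marginal_def)
  ultimately show "\<exists>z. slice_left (dV t) (Rdim dV dW (t-1)) p q (marginal T dV dW t \<sigma>) = z \<cdot>\<^sub>m 1\<^sub>m (dV t)"
    using slice_left_scalar_if_invariant[OF n _ _ _ bspec[OF U_irr t] p q] U_rep t
    unfolding proj_rep_def by blast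
qed

section \<open>Averaging over the symmetry group\<close>

lemma her_action_herm: "her_action G D act \<Longrightarrow> g \<in> carrier G \<Longrightarrow> herm D X \<Longrightarrow> herm D (act g X)"
  unfolding her_action_def by blast

lemma her_action_one: "her_action G D act \<Longrightarrow> herm D X \<Longrightarrow> act \<one>\<^bsub>G\<^esub> X = X"
  unfolding her_action_def by blast

lemma her_action_mult:
  "her_action G D act \<Longrightarrow> g \<in> carrier G \<Longrightarrow> h \<in> carrier G \<Longrightarrow> herm D X \<Longrightarrow>
   act (g \<otimes>\<^bsub>G\<^esub> h) X = act g (act h X)"
  unfolding her_action_def by blast

lemma her_action_add:
  "her_action G D act \<Longrightarrow> g \<in> carrier G \<Longrightarrow> herm D X \<Longrightarrow> herm D Y \<Longrightarrow> act g (X + Y) = act g X + act g Y"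
  unfolding her_action_def by blast

lemma her_action_smult:
  "her_action G D act \<Longrightarrow> g \<in> carrier G \<Longrightarrow> herm D X \<Longrightarrow>
   act g (complex_of_real r \<cdot>\<^sub>m X) = complex_of_real r \<cdot>\<^sub>m act g X"
  unfolding her_action_def by blast

lemma her_action_inner:
  "her_action G D act \<Longrightarrow> g \<in> carrier G \<Longrightarrow> herm D X \<Longrightarrow> herm D Y \<Longrightarrow>
   hs_inner (act g X) (act g Y) = hs_inner X Y"
  unfolding her_action_def by blast

lemma her_action_zero:
  assumes act: "her_action G D act" and g: "g \<in> carrier G"
  shows "act g (0\<^sub>m D D) = 0\<^sub>m D D"
proof -
  have zero: "herm D (0\<^sub>m D D)" by (rule hermI) auto
  have "act g (0\<^sub>m D D) = act g (complex_of_real 0 \<cdot>\<^sub>m 0\<^sub>m D D)" by simp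
  also have "\<dots> = complex_of_real 0 \<cdot>\<^sub>m act g (0\<^sub>m D D)" by (rule her_action_smult[OF act g zero])
  also have "\<dots> = 0\<^sub>m D D" using herm_carrier[OF her_action_herm[OF act g zero]] by (intro eq_matI) auto
  finally show ?thesis .
qed

lemma her_action_inv_cancel:
  assumes G: "group G" and act: "her_action G D act" and g: "g \<in> carrier G" and X: "herm D X"
  shows "act g (act (inv\<^bsub>G\<^esub> g) X) = X"
  using her_action_mult[OF act g group.inv_closed[OF G g] X] her_action_one[OF act X] group.r_inv[OF G g]
  by simp

lemma her_action_inner_inv:
  assumes G: "group G" and act: "her_action G D act" and g: "g \<in> carrier G" and X: "herm D X" and Y: "herm D Y"
  shows "hs_inner (act (inv\<^bsub>G\<^esub> g) X) Y = hs_inner X (act g Y)"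
  using her_action_inner[OF act g her_action_herm[OF act group.inv_closed[OF G g] X] Y]
    her_action_inv_cancel[OF G act g X]
  by simp

lemma index_action_bij:
  assumes G: "group G" and act: "index_action G n a" and g: "g \<in> carrier G"
  shows "bij_betw (a g) {..<n} {..<n}"
proof (rule bij_betw_byWitness[of _ "a (inv\<^bsub>G\<^esub> g)"])
  have ig: "inv\<^bsub>G\<^esub> g \<in> carrier G" using group.inv_closed[OF G g] .
  show "\<forall>x\<in>{..<n}. a (inv\<^bsub>G\<^esub> g) (a g x) = x" "\<forall>x\<in>{..<n}. a g (a (inv\<^bsub>G\<^esub> g) x) = x"
    using act ig g group.l_inv[OF G g] group.r_inv[OF G g] unfolding index_action_def by (metis lessThan_iff)+
  show "a g ` {..<n} \<subseteq> {..<n}" "a (inv\<^bsub>G\<^esub> g) ` {..<n} \<subseteq> {..<n}"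
    using act ig g unfolding index_action_def by auto
qed

lemma right_mult_inv_bij:
  assumes G: "group G" and h: "h \<in> carrier G"
  shows "bij_betw (\<lambda>g. g \<otimes>\<^bsub>G\<^esub> inv\<^bsub>G\<^esub> h) (carrier G) (carrier G)"
proof (rule bij_betw_byWitness[of _ "\<lambda>g. g \<otimes>\<^bsub>G\<^esub> h"])
  have ih: "inv\<^bsub>G\<^esub> h \<in> carrier G" using group.inv_closed[OF G h] .
  show "\<forall>g\<in>carrier G. g \<otimes>\<^bsub>G\<^esub> inv\<^bsub>G\<^esub> h \<otimes>\<^bsub>G\<^esub> h = g" "\<forall>g\<in>carrier G. g \<otimes>\<^bsub>G\<^esub> h \<otimes>\<^bsub>G\<^esub> inv\<^bsub>G\<^esub> h = g"
    using G h ih by (simp_all add: group.is_monoid monoid.m_assoc group.l_inv group.r_inv)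
  show "(\<lambda>g. g \<otimes>\<^bsub>G\<^esub> inv\<^bsub>G\<^esub> h) ` carrier G \<subseteq> carrier G" "(\<lambda>g. g \<otimes>\<^bsub>G\<^esub> h) ` carrier G \<subseteq> carrier G"
    using G h ih by (auto simp: group.is_monoid monoid.m_closed)
qed

definition mat_sum :: "nat \<Rightarrow> 'b set \<Rightarrow> ('b \<Rightarrow> complex mat) \<Rightarrow> complex mat" where
  "mat_sum D S f = mat D D (\<lambda>(i,j). \<Sum>x\<in>S. f x $$ (i,j))"

lemma mat_sum_carrier [simp]: "mat_sum D S f \<in> carrier_mat D D"
  unfolding mat_sum_def by simp

lemma mat_sum_dim [simp]: "dim_row (mat_sum D S f) = D" "dim_col (mat_sum D S f) = D"
  unfolding mat_sum_def by simp_all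

lemma mat_sum_index [simp]: "i < D \<Longrightarrow> j < D \<Longrightarrow> mat_sum D S f $$ (i,j) = (\<Sum>x\<in>S. f x $$ (i,j))"
  unfolding mat_sum_def by simp

lemma msum_eq_mat_sum: "msum M D \<Phi> = mat_sum D {..<M} \<Phi>"
  unfolding msum_def mat_sum_def ..

lemma mat_sum_cong: "(\<And>x. x \<in> S \<Longrightarrow> f x = g x) \<Longrightarrow> mat_sum D S f = mat_sum D S g"
  unfolding mat_sum_def by simp

lemma mat_sum_reindex: "bij_betw k S S' \<Longrightarrow> mat_sum D S (\<lambda>x. f (k x)) = mat_sum D S' f"
  by (rule eq_matI) (simp_all add: sum.reindex_bij_betw[of k S S' "\<lambda>x. f x $$ _"])

lemma mat_sum_herm:
  assumes "\<forall>x\<in>S. herm D (f x)" shows "herm D (mat_sum D S f)"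
proof (rule hermI)
  fix i j assume "i < D" "j < D"
  then show "mat_sum D S f $$ (i,j) = cnj (mat_sum D S f $$ (j,i))"
    using assms herm_index[OF _ \<open>i < D\<close> \<open>j < D\<close>] by simp
qed simp

lemma mat_sum_empty [simp]: "mat_sum D {} f = 0\<^sub>m D D"
  by (rule eq_matI) simp_all

lemma mat_sum_insert:
  "finite S \<Longrightarrow> x \<notin> S \<Longrightarrow> f x \<in> carrier_mat D D \<Longrightarrow> mat_sum D (insert x S) f = f x + mat_sum D S f"
  by (rule eq_matI) auto

lemma her_action_mat_sum:
  assumes act: "her_action G D act" and g: "g \<in> carrier G" and S: "finite S" and f: "\<forall>x\<in>S. herm D (f x)"
  shows "act g (mat_sum D S f) = mat_sum D S (\<lambda>x. act g (f x))"
  using S f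
proof (induction S rule: finite_induct)
  case empty
  then show ?case using her_action_zero[OF act g] by simp
next
  case (insert x S)
  have "herm D (f x)" "herm D (mat_sum D S f)" using insert.prems by (auto intro: mat_sum_herm)
  then show ?case
    using insert her_action_add[OF act g] her_action_herm[OF act g]
    by (simp add: mat_sum_insert herm_carrier)
qed

lemma hs_inner_mat_sum:
  assumes "finite S" and "\<forall>x\<in>S. f x \<in> carrier_mat D D" and C: "C \<in> carrier_mat D D"
  shows "hs_inner (mat_sum D S f) C = (\<Sum>x\<in>S. hs_inner (f x) C)"
  using assms
  by (induction S rule: finite_induct) (simp_all add: hs_inner_zero_left mat_sum_insert hs_inner_add_left[of _ D])

definition tuple_mean :: "nat \<Rightarrow> 'b set \<Rightarrow> ('b \<Rightarrow> nat \<Rightarrow> complex mat) \<Rightarrow> nat \<Rightarrow> complex mat" where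
  "tuple_mean D S F = (\<lambda>m. complex_of_real (1 / real (card S)) \<cdot>\<^sub>m mat_sum D S (\<lambda>x. F x m))"

lemma tuple_mean_carrier [simp]: "tuple_mean D S F m \<in> carrier_mat D D"
  unfolding tuple_mean_def by simp

lemma tuple_mean_dim [simp]: "dim_row (tuple_mean D S F m) = D" "dim_col (tuple_mean D S F m) = D"
  unfolding tuple_mean_def by simp_all

lemma tuple_mean_insert:
  assumes S: "finite S" "S \<noteq> {}" and x: "x \<notin> S" and F: "F x m \<in> carrier_mat D D"
  defines "u \<equiv> 1 / (real (card S) + 1)"
  shows "tuple_mean D (insert x S) F m =
    complex_of_real u \<cdot>\<^sub>m F x m + complex_of_real (1 - u) \<cdot>\<^sub>m tuple_mean D S F m"
proof (rule eq_matI)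
  fix i j assume "i < dim_row (complex_of_real u \<cdot>\<^sub>m F x m + complex_of_real (1 - u) \<cdot>\<^sub>m tuple_mean D S F m)"
    "j < dim_col (complex_of_real u \<cdot>\<^sub>m F x m + complex_of_real (1 - u) \<cdot>\<^sub>m tuple_mean D S F m)"
  then have ij: "i < D" "j < D" using F by auto
  define N :: complex where "N = of_nat (card S)"
  have "N + 1 = of_nat (Suc (card S))" unfolding N_def by simp
  then have N: "N \<noteq> 0" "N + 1 \<noteq> 0" using S unfolding N_def by (simp_all only: of_nat_eq_0_iff) simp_all
  have u: "complex_of_real u = 1 / (N + 1)" "complex_of_real (1 - u) = 1 - 1 / (N + 1)"
    by (simp_all add: u_def N_def)
  have "tuple_mean D (insert x S) F m $$ (i,j) = (F x m $$ (i,j) + (\<Sum>y\<in>S. F y m $$ (i,j))) / (N + 1)"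
    using ij S x by (simp add: tuple_mean_def N_def add.commute)
  also have "\<dots> = 1 / (N + 1) * F x m $$ (i,j) + (1 - 1 / (N + 1)) * ((\<Sum>y\<in>S. F y m $$ (i,j)) / N)"
  proof -
    have "(1 - 1 / (N + 1)) * (s / N) = s / (N + 1)" for s
      using N by (simp add: diff_divide_eq_iff)
    then show ?thesis by (simp add: add_divide_distrib)
  qed
  also have "\<dots> = (complex_of_real u \<cdot>\<^sub>m F x m + complex_of_real (1 - u) \<cdot>\<^sub>m tuple_mean D S F m) $$ (i,j)"
    unfolding u using ij F by (simp add: tuple_mean_def N_def)
  finally show "tuple_mean D (insert x S) F m $$ (i,j) =
    (complex_of_real u \<cdot>\<^sub>m F x m + complex_of_real (1 - u) \<cdot>\<^sub>m tuple_mean D S F m) $$ (i,j)" .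
qed (use F in \<open>simp_all add: tuple_mean_def\<close>)

lemma tuple_mean_mem_convex:
  assumes A: "tuple_convex A" and S: "finite S" "S \<noteq> {}"
    and F: "\<forall>x\<in>S. F x \<in> A" and F_carrier: "\<forall>x\<in>S. \<forall>m. F x m \<in> carrier_mat D D"
  shows "tuple_mean D S F \<in> A"
  using S F F_carrier
proof (induction S rule: finite_ne_induct)
  case (singleton x)
  have "dim_row (F x m) = D" "dim_col (F x m) = D" for m using singleton by auto
  then have "tuple_mean D {x} F = F x" by (intro ext eq_matI) (auto simp: tuple_mean_def)
  then show ?case using singleton by simp
next
  case (insert x S)
  define u where "u = 1 / (real (card S) + 1)"
  have "0 \<le> u" "u \<le> 1" by (simp_all add: u_def)
  then have "(\<lambda>m. complex_of_real u \<cdot>\<^sub>m F x m + complex_of_real (1 - u) \<cdot>\<^sub>m tuple_mean D S F m) \<in> A"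
    using A insert unfolding tuple_convex_def by blast
  moreover have "tuple_mean D (insert x S) F =
      (\<lambda>m. complex_of_real u \<cdot>\<^sub>m F x m + complex_of_real (1 - u) \<cdot>\<^sub>m tuple_mean D S F m)"
    using insert by (intro ext) (simp add: tuple_mean_insert u_def)
  ultimately show ?case by simp
qed

lemma hs_inner_tuple_mean:
  assumes S: "finite S" and F: "\<forall>x\<in>S. F x m \<in> carrier_mat D D" and C: "C \<in> carrier_mat D D"
  shows "hs_inner (tuple_mean D S F m) C = (\<Sum>x\<in>S. hs_inner (F x m) C) / real (card S)"
proof -
  have "hs_inner (tuple_mean D S F m) C = 1 / real (card S) * hs_inner (mat_sum D S (\<lambda>x. F x m)) C"
    unfolding tuple_mean_def by (rule hs_inner_smult_left[OF mat_sum_carrier C])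
  then show ?thesis by (simp add: hs_inner_mat_sum[OF S F C])
qed

lemma msum_tuple_mean:
  "msum M D (tuple_mean D S F) = complex_of_real (1 / real (card S)) \<cdot>\<^sub>m mat_sum D S (\<lambda>x. msum M D (F x))"
  by (rule eq_matI) (simp_all add: tuple_mean_def msum_def sum_distrib_left sum.swap[of _ S])

lemma msum_tuple_act:
  assumes G: "group G" and act: "her_action G D actH" and ia: "index_action G M actM" and g: "g \<in> carrier G"
    and \<Phi>: "\<forall>m<M. herm D (\<Phi> m)"
  shows "msum M D (tuple_act G M D actM actH g \<Phi>) = actH (inv\<^bsub>G\<^esub> g) (msum M D \<Phi>)"
proof -
  have "msum M D (tuple_act G M D actM actH g \<Phi>) = mat_sum D {..<M} (\<lambda>m. actH (inv\<^bsub>G\<^esub> g) (\<Phi> (actM g m)))"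
    unfolding msum_eq_mat_sum tuple_act_def by (rule mat_sum_cong) simp
  also have "\<dots> = mat_sum D {..<M} (\<lambda>m. actH (inv\<^bsub>G\<^esub> g) (\<Phi> m))"
    by (rule mat_sum_reindex[OF index_action_bij[OF G ia g]])
  also have "\<dots> = actH (inv\<^bsub>G\<^esub> g) (msum M D \<Phi>)"
    unfolding msum_eq_mat_sum
    by (rule her_action_mat_sum[OF act group.inv_closed[OF G g] finite_lessThan, symmetric]) (use \<Phi> in auto)
  finally show ?thesis .
qed

lemma sum_hs_inner_tuple_act:
  assumes G: "group G" and act: "her_action G D actH" and ia: "index_action G M actM" and g: "g \<in> carrier G"
    and \<Phi>: "\<forall>m<M. herm D (\<Phi> m)" and B: "\<forall>m<M. herm D (B m)" and BB': "\<forall>m<M. actH g (B m) = B' (actM g m)"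
  shows "(\<Sum>m<M. hs_inner (tuple_act G M D actM actH g \<Phi> m) (B m)) = (\<Sum>m<M. hs_inner (\<Phi> m) (B' m))"
proof -
  have lt: "\<forall>m<M. actM g m < M" using ia g unfolding index_action_def by blast
  have "(\<Sum>m<M. hs_inner (tuple_act G M D actM actH g \<Phi> m) (B m)) = (\<Sum>m<M. hs_inner (\<Phi> (actM g m)) (B' (actM g m)))"
    using lt \<Phi> B BB' by (intro sum.cong refl) (simp add: tuple_act_def her_action_inner_inv[OF G act g])
  also have "\<dots> = (\<Sum>m<M. hs_inner (\<Phi> m) (B' m))"
    by (rule sum.reindex_bij_betw[OF index_action_bij[OF G ia g]])
  finally show ?thesis .
qed

definition symmetrize :: "('g, 'z) monoid_scheme \<Rightarrow> nat \<Rightarrow> nat \<Rightarrow> ('g \<Rightarrow> nat \<Rightarrow> nat) \<Rightarrow>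
    ('g \<Rightarrow> complex mat \<Rightarrow> complex mat) \<Rightarrow> (nat \<Rightarrow> complex mat) \<Rightarrow> nat \<Rightarrow> complex mat" where
  "symmetrize G M D actM actH \<Phi> = tuple_mean D (carrier G) (\<lambda>g. tuple_act G M D actM actH g \<Phi>)"

lemma tuple_space_carrier: "\<Phi> \<in> tuple_space M D \<Longrightarrow> \<Phi> m \<in> carrier_mat D D"
  unfolding tuple_space_def by (cases "m < M") auto

lemma symmetrize_mem:
  assumes G: "group G" and fin: "finite (carrier G)"
    and A: "tuple_convex A" "A \<subseteq> tuple_space M D" and sym: "\<forall>g\<in>carrier G. \<forall>\<Phi>\<in>A. tuple_act G M D actM actH g \<Phi> \<in> A"
    and \<Phi>: "\<Phi> \<in> A"
  shows "symmetrize G M D actM actH \<Phi> \<in> A"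
  unfolding symmetrize_def
proof (rule tuple_mean_mem_convex[OF A(1) fin])
  show "carrier G \<noteq> {}" using monoid.one_closed[OF group.is_monoid[OF G]] by blast
  show "\<forall>g\<in>carrier G. tuple_act G M D actM actH g \<Phi> \<in> A" using sym \<Phi> by blast
  then show "\<forall>g\<in>carrier G. \<forall>m. tuple_act G M D actM actH g \<Phi> m \<in> carrier_mat D D"
    using A(2) tuple_space_carrier by blast
qed

lemma sum_hs_inner_symmetrize:
  assumes G: "group G" and fin: "finite (carrier G)"
    and act: "her_action G D actH" and ia: "index_action G M actM"
    and \<Phi>: "\<forall>m<M. herm D (\<Phi> m)" and B: "\<forall>m<M. herm D (B m)"
    and B_sym: "\<forall>g\<in>carrier G. \<forall>m<M. actH g (B m) = B (actM g m)"
  shows "(\<Sum>m<M. hs_inner (symmetrize G M D actM actH \<Phi> m) (B m)) = (\<Sum>m<M. hs_inner (\<Phi> m) (B m))"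
proof -
  let ?\<Phi>g = "\<lambda>g. tuple_act G M D actM actH g \<Phi>"
  have ne: "carrier G \<noteq> {}" using monoid.one_closed[OF group.is_monoid[OF G]] by blast
  have "?\<Phi>g g m \<in> carrier_mat D D" if "g \<in> carrier G" "m < M" for g m
    using that \<Phi> ia her_action_herm[OF act group.inv_closed[OF G]] herm_carrier
    unfolding tuple_act_def index_action_def by simp
  then have "(\<Sum>m<M. hs_inner (symmetrize G M D actM actH \<Phi> m) (B m)) =
      (\<Sum>m<M. (\<Sum>g\<in>carrier G. hs_inner (?\<Phi>g g m) (B m)) / real (card (carrier G)))"
    unfolding symmetrize_def using B herm_carrier by (intro sum.cong refl hs_inner_tuple_mean[OF fin]) auto
  also have "\<dots> = (\<Sum>g\<in>carrier G. \<Sum>m<M. hs_inner (?\<Phi>g g m) (B m)) / real (card (carrier G))"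
    by (simp only: sum_divide_distrib[symmetric] sum.swap[of _ "{..<M}"])
  also have "\<dots> = (\<Sum>g\<in>carrier G. \<Sum>m<M. hs_inner (\<Phi> m) (B m)) / real (card (carrier G))"
  proof -
    have "(\<Sum>m<M. hs_inner (?\<Phi>g g m) (B m)) = (\<Sum>m<M. hs_inner (\<Phi> m) (B m))" if "g \<in> carrier G" for g
      using sum_hs_inner_tuple_act[OF G act ia that \<Phi> B] B_sym that by blast
    then show ?thesis by simp
  qed
  also have "\<dots> = (\<Sum>m<M. hs_inner (\<Phi> m) (B m))"
    using fin ne by (simp add: card_gt_0_iff)
  finally show ?thesis .
qed

lemma msum_symmetrize_invariant:
  assumes G: "group G" and fin: "finite (carrier G)"
    and act: "her_action G D actH" and ia: "index_action G M actM"
    and \<Phi>: "\<forall>m<M. herm D (\<Phi> m)" and h: "h \<in> carrier G"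
  shows "actH h (msum M D (symmetrize G M D actM actH \<Phi>)) = msum M D (symmetrize G M D actM actH \<Phi>)"
proof -
  define \<sigma> where "\<sigma> = msum M D \<Phi>"
  define S where "S = mat_sum D (carrier G) (\<lambda>g. actH (inv\<^bsub>G\<^esub> g) \<sigma>)"
  have \<sigma>_herm: "herm D \<sigma>" unfolding \<sigma>_def msum_eq_mat_sum using \<Phi> by (intro mat_sum_herm) simp
  have orbit_herm: "\<forall>g\<in>carrier G. herm D (actH (inv\<^bsub>G\<^esub> g) \<sigma>)"
    using her_action_herm[OF act group.inv_closed[OF G] \<sigma>_herm] by blast
  have "mat_sum D (carrier G) (\<lambda>g. msum M D (tuple_act G M D actM actH g \<Phi>)) = S"
    unfolding S_def \<sigma>_def by (rule mat_sum_cong) (rule msum_tuple_act[OF G act ia _ \<Phi>])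
  then have sym_eq: "msum M D (symmetrize G M D actM actH \<Phi>) = complex_of_real (1 / real (card (carrier G))) \<cdot>\<^sub>m S"
    unfolding symmetrize_def msum_tuple_mean by simp
  have "actH h S = mat_sum D (carrier G) (\<lambda>g. actH h (actH (inv\<^bsub>G\<^esub> g) \<sigma>))"
    unfolding S_def by (rule her_action_mat_sum[OF act h fin orbit_herm])
  also have "\<dots> = mat_sum D (carrier G) (\<lambda>g. (\<lambda>g. actH (inv\<^bsub>G\<^esub> g) \<sigma>) (g \<otimes>\<^bsub>G\<^esub> inv\<^bsub>G\<^esub> h))"
  proof (rule mat_sum_cong)
    fix g assume g: "g \<in> carrier G"
    have "inv\<^bsub>G\<^esub> (g \<otimes>\<^bsub>G\<^esub> inv\<^bsub>G\<^esub> h) = h \<otimes>\<^bsub>G\<^esub> inv\<^bsub>G\<^esub> g"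
      using group.inv_mult_group[OF G g group.inv_closed[OF G h]] group.inv_inv[OF G h] by simp
    then show "actH h (actH (inv\<^bsub>G\<^esub> g) \<sigma>) = actH (inv\<^bsub>G\<^esub> (g \<otimes>\<^bsub>G\<^esub> inv\<^bsub>G\<^esub> h)) \<sigma>"
      using her_action_mult[OF act h group.inv_closed[OF G g] \<sigma>_herm] by simp
  qed
  also have "\<dots> = S" unfolding S_def by (rule mat_sum_reindex[OF right_mult_inv_bij[OF G h]])
  finally have "actH h S = S" .
  moreover have "herm D S" unfolding S_def by (rule mat_sum_herm[OF orbit_herm])
  ultimately show ?thesis unfolding sym_eq by (simp only: her_action_smult[OF act h])
qed

section \<open>The optimization problem\<close>

lemma Pobj_le_Sup_closure:
  assumes A: "A \<subseteq> tuple_space M D" and c: "\<forall>m<M. c m \<in> carrier_mat D D"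
    and \<Phi>: "\<Phi> \<in> tuple_closure M D A"
  shows "ereal (Pobj M c \<Phi>) \<le> Sup ((\<lambda>\<Psi>. ereal (Pobj M c \<Psi>)) ` A)"
proof -
  obtain \<Phi>s where \<Phi>_space: "\<Phi> \<in> tuple_space M D" and \<Phi>s: "\<forall>k. \<Phi>s k \<in> A"
    and lim: "\<forall>m<M. \<forall>i<D. \<forall>j<D. (\<lambda>k. \<Phi>s k m $$ (i,j)) \<longlonglongrightarrow> \<Phi> m $$ (i,j)"
    using \<Phi> unfolding tuple_closure_def by blast
  have Pobj: "Pobj M c \<Psi> = (\<Sum>m<M. Re (\<Sum>i<D. \<Sum>k<D. \<Psi> m $$ (i,k) * c m $$ (k,i)))"
    if "\<Psi> \<in> tuple_space M D" for \<Psi>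
    unfolding Pobj_def using that c by (intro sum.cong refl hs_inner_formula) (auto intro: tuple_space_carrier)
  have "(\<lambda>k. Pobj M c (\<Phi>s k)) \<longlonglongrightarrow> Pobj M c \<Phi>"
    unfolding Pobj[OF \<Phi>_space] Pobj[OF subsetD[OF A \<Phi>s[rule_format]]]
    by (intro tendsto_sum tendsto_Re tendsto_mult tendsto_const) (use lim in auto)
  moreover have "\<forall>k. ereal (Pobj M c (\<Phi>s k)) \<le> Sup ((\<lambda>\<Psi>. ereal (Pobj M c \<Psi>)) ` A)"
    using \<Phi>s by (auto intro: SUP_upper)
  ultimately show ?thesis by (intro LIMSEQ_le_const2[OF tendsto_ereal]) auto
qed

lemma eta_convex_combination:
  assumes \<Phi>: "\<Phi> \<in> tuple_space M D" and \<Psi>: "\<Psi> \<in> tuple_space M D" and a: "\<forall>m<M. a j m \<in> carrier_mat D D"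
  shows "eta M a b j (\<lambda>m. complex_of_real u \<cdot>\<^sub>m \<Phi> m + complex_of_real (1 - u) \<cdot>\<^sub>m \<Psi> m) =
    u * eta M a b j \<Phi> + (1 - u) * eta M a b j \<Psi>"
proof -
  have "(\<Sum>m<M. hs_inner (complex_of_real u \<cdot>\<^sub>m \<Phi> m + complex_of_real (1 - u) \<cdot>\<^sub>m \<Psi> m) (a j m)) =
      (\<Sum>m<M. u * hs_inner (\<Phi> m) (a j m) + (1 - u) * hs_inner (\<Psi> m) (a j m))"
    using tuple_space_carrier[OF \<Phi>] tuple_space_carrier[OF \<Psi>] a
    by (intro sum.cong refl hs_inner_lincomb) auto
  also have "\<dots> = u * (\<Sum>m<M. hs_inner (\<Phi> m) (a j m)) + (1 - u) * (\<Sum>m<M. hs_inner (\<Psi> m) (a j m))"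
    by (simp add: sum.distrib sum_distrib_left)
  finally show ?thesis unfolding eta_def by (simp add: algebra_simps)
qed

lemma tuple_convex_constrained:
  assumes A: "tuple_convex A" "A \<subseteq> tuple_space M D" and a: "\<forall>j<J. \<forall>m<M. a j m \<in> carrier_mat D D"
  shows "tuple_convex {\<Phi> \<in> A. \<forall>j<J. eta M a b j \<Phi> \<le> 0}"
  unfolding tuple_convex_def
proof (intro ballI allI impI, elim conjE)
  fix \<Phi> \<Psi> and u :: real
  assume \<Phi>: "\<Phi> \<in> {\<Phi> \<in> A. \<forall>j<J. eta M a b j \<Phi> \<le> 0}" and \<Psi>: "\<Psi> \<in> {\<Phi> \<in> A. \<forall>j<J. eta M a b j \<Phi> \<le> 0}"
    and u: "0 \<le> u" "u \<le> 1"
  have "eta M a b j (\<lambda>m. complex_of_real u \<cdot>\<^sub>m \<Phi> m + complex_of_real (1 - u) \<cdot>\<^sub>m \<Psi> m) \<le> 0" if j: "j < J" for j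
  proof -
    have "eta M a b j (\<lambda>m. complex_of_real u \<cdot>\<^sub>m \<Phi> m + complex_of_real (1 - u) \<cdot>\<^sub>m \<Psi> m) =
        u * eta M a b j \<Phi> + (1 - u) * eta M a b j \<Psi>"
      using \<Phi> \<Psi> A(2) a j by (intro eta_convex_combination) auto
    then show ?thesis using \<Phi> \<Psi> u j by (simp add: add_nonpos_nonpos mult_nonneg_nonpos)
  qed
  then show "(\<lambda>m. complex_of_real u \<cdot>\<^sub>m \<Phi> m + complex_of_real (1 - u) \<cdot>\<^sub>m \<Psi> m) \<in> {\<Phi> \<in> A. \<forall>j<J. eta M a b j \<Phi> \<le> 0}"
    using A(1) \<Phi> \<Psi> u unfolding tuple_convex_def by blast
qed

lemma eta_tuple_act:
  assumes G: "group G" and act: "her_action G D actH" and ia: "index_action G M actM" and ja: "index_action G J actJ"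
    and g: "g \<in> carrier G" and j: "j < J" and \<Phi>: "\<forall>m<M. herm D (\<Phi> m)" and a: "\<forall>j<J. \<forall>m<M. herm D (a j m)"
    and sym_a: "\<forall>g\<in>carrier G. \<forall>j<J. \<forall>m<M. actH g (a j m) = a (actJ g j) (actM g m)"
    and sym_b: "\<forall>g\<in>carrier G. \<forall>j<J. b j = b (actJ g j)"
  shows "eta M a b j (tuple_act G M D actM actH g \<Phi>) = eta M a b (actJ g j) \<Phi>"
  unfolding eta_def
  using sum_hs_inner_tuple_act[OF G act ia g \<Phi>, of "a j" "a (actJ g j)"] a sym_a sym_b g j by simp

lemma subset_tuple_closure: "A \<subseteq> tuple_space M D \<Longrightarrow> A \<subseteq> tuple_closure M D A"
  unfolding tuple_closure_def by (auto intro!: exI[of _ "\<lambda>k. _"])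

lemma Sup_maximally_mixed_le_Sup:
  assumes T1: "1 \<le> T" and dims: "\<forall>t\<in>{1..T}. 1 \<le> dV t \<and> 1 \<le> dW t"
    and P: "P \<subseteq> tuple_space M (Rdim dV dW T)" and c: "\<forall>m<M. c m \<in> carrier_mat (Rdim dV dW T) (Rdim dV dW T)"
    and P_closure: "tuple_closure M (Rdim dV dW T) P =
      {\<Phi> \<in> tuple_closure M (Rdim dV dW T) A. \<forall>j<J. eta M a b j \<Phi> \<le> 0}"
    and A_closure: "tuple_closure M (Rdim dV dW T) A = {\<Phi> \<in> C. msum M (Rdim dV dW T) \<Phi> \<in> S_G T dV dW}"
  shows "Sup ((\<lambda>\<Phi>. ereal (Pobj M c \<Phi>)) `
           {\<Phi> \<in> C. msum M (Rdim dV dW T) \<Phi> = (1 / of_nat (\<Prod>t\<in>{1..T}. dV t)) \<cdot>\<^sub>m 1\<^sub>m (Rdim dV dW T) \<and>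
                     (\<forall>j<J. eta M a b j \<Phi> \<le> 0)})
         \<le> Sup ((\<lambda>\<Phi>. ereal (Pobj M c \<Phi>)) ` P)"
proof (rule SUP_least)
  fix \<Phi> assume "\<Phi> \<in> {\<Phi> \<in> C. msum M (Rdim dV dW T) \<Phi> = (1 / of_nat (\<Prod>t\<in>{1..T}. dV t)) \<cdot>\<^sub>m 1\<^sub>m (Rdim dV dW T) \<and>
                     (\<forall>j<J. eta M a b j \<Phi> \<le> 0)}"
  then have "\<Phi> \<in> tuple_closure M (Rdim dV dW T) P"
    using P_closure A_closure maximally_mixed_in_S_G[OF T1 dims] by auto
  then show "ereal (Pobj M c \<Phi>) \<le> Sup ((\<lambda>\<Phi>. ereal (Pobj M c \<Phi>)) ` P)"
    by (rule Pobj_le_Sup_closure[OF P c])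
qed

lemma Sup_le_Sup_maximally_mixed:
  fixes G :: "('g, 'z) monoid_scheme"
  assumes T1: "1 \<le> T" and dims: "\<forall>t\<in>{1..T}. 1 \<le> dV t \<and> 1 \<le> dW t"
    and G: "group G" "finite (carrier G)"
    and act: "her_action G (Rdim dV dW T) actH" and ia: "index_action G M actM"
    and P: "P \<subseteq> tuple_space M (Rdim dV dW T)" "P \<subseteq> C" "tuple_convex P"
    and P_sym: "\<forall>g\<in>carrier G. \<forall>\<Phi>\<in>P. tuple_act G M (Rdim dV dW T) actM actH g \<Phi> \<in> P"
    and P_herm: "\<forall>\<Phi>\<in>P. \<forall>m<M. herm (Rdim dV dW T) (\<Phi> m)"
    and P_S_G: "\<forall>\<Phi>\<in>P. msum M (Rdim dV dW T) \<Phi> \<in> S_G T dV dW"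
    and P_eta: "\<forall>\<Phi>\<in>P. \<forall>j<J. eta M a b j \<Phi> \<le> 0"
    and c_herm: "\<forall>m<M. herm (Rdim dV dW T) (c m)"
    and sym_c: "\<forall>g\<in>carrier G. \<forall>m<M. actH g (c m) = c (actM g m)"
    and H_sub: "\<forall>t\<in>{1..T}. subgroup (H t) G"
    and U_rep: "\<forall>t\<in>{1..T}. proj_rep G (H t) (dV t) (U t)"
    and U_irr: "\<forall>t\<in>{1..T}. irreducible_rep (H t) (dV t) (U t)"
    and U_cov: "\<forall>t\<in>{1..T}. \<forall>h\<in>H t. \<forall>X. herm (Rdim dV dW T) X \<longrightarrow>
        ptr_left (Qdim T dV dW t * dW t) (dV t * Rdim dV dW (t-1)) (actH h X) =
        Ad_tensor_id (U t h) (dV t) (Rdim dV dW (t-1))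
          (ptr_left (Qdim T dV dW t * dW t) (dV t * Rdim dV dW (t-1)) X)"
  shows "Sup ((\<lambda>\<Phi>. ereal (Pobj M c \<Phi>)) ` P)
    \<le> Sup ((\<lambda>\<Phi>. ereal (Pobj M c \<Phi>)) `
           {\<Phi> \<in> C. msum M (Rdim dV dW T) \<Phi> = (1 / of_nat (\<Prod>t\<in>{1..T}. dV t)) \<cdot>\<^sub>m 1\<^sub>m (Rdim dV dW T) \<and>
                     (\<forall>j<J. eta M a b j \<Phi> \<le> 0)})"
proof (rule SUP_mono)
  fix \<Phi> assume \<Phi>: "\<Phi> \<in> P"
  define \<Psi> where "\<Psi> = symmetrize G M (Rdim dV dW T) actM actH \<Phi>"
  have \<Psi>: "\<Psi> \<in> P" unfolding \<Psi>_def by (rule symmetrize_mem[OF G P(3,1) P_sym \<Phi>])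
  have "Pobj M c \<Psi> = Pobj M c \<Phi>"
    unfolding Pobj_def \<Psi>_def using \<Phi> P_herm by (intro sum_hs_inner_symmetrize[OF G act ia _ c_herm sym_c]) blast
  moreover have "msum M (Rdim dV dW T) \<Psi> = (1 / of_nat (\<Prod>t\<in>{1..T}. dV t)) \<cdot>\<^sub>m 1\<^sub>m (Rdim dV dW T)"
  proof (rule invariant_S_G_maximally_mixed[OF T1 dims _ _ _ H_sub U_rep U_irr U_cov])
    show "msum M (Rdim dV dW T) \<Psi> \<in> S_G T dV dW" using P_S_G \<Psi> by blast
    show "herm (Rdim dV dW T) (msum M (Rdim dV dW T) \<Psi>)"
      using P_herm \<Psi> unfolding msum_eq_mat_sum by (intro mat_sum_herm) simp
    show "\<forall>h\<in>carrier G. actH h (msum M (Rdim dV dW T) \<Psi>) = msum M (Rdim dV dW T) \<Psi>"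
      using P_herm \<Phi> unfolding \<Psi>_def by (intro ballI msum_symmetrize_invariant[OF G act ia]) blast+
  qed
  ultimately show "\<exists>\<Psi>'\<in>{\<Phi> \<in> C. msum M (Rdim dV dW T) \<Phi> = (1 / of_nat (\<Prod>t\<in>{1..T}. dV t)) \<cdot>\<^sub>m 1\<^sub>m (Rdim dV dW T) \<and>
      (\<forall>j<J. eta M a b j \<Phi> \<le> 0)}. ereal (Pobj M c \<Phi>) \<le> ereal (Pobj M c \<Psi>')"
    using \<Psi> P(2) P_eta by force
qed

theorem proposition2:
  fixes T M J :: nat
    and dV dW :: "nat \<Rightarrow> nat"
    and c :: "nat \<Rightarrow> complex mat" and a :: "nat \<Rightarrow> nat \<Rightarrow> complex mat" and b :: "nat \<Rightarrow> real"
    and \<T> \<C> :: "(nat \<Rightarrow> complex mat) set"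
    and G :: "'g monoid"
    and actM actJ :: "'g \<Rightarrow> nat \<Rightarrow> nat"
    and actH :: "'g \<Rightarrow> complex mat \<Rightarrow> complex mat"
    and H :: "nat \<Rightarrow> 'g set"
    and U :: "nat \<Rightarrow> 'g \<Rightarrow> complex mat \<times> bool"
  defines "D \<equiv> Rdim dV dW T"
    and "\<P> \<equiv> {\<Phi> \<in> \<T>. \<forall>j<J. eta M a b j \<Phi> \<le> 0}"
  assumes T1: "1 \<le> T" and M2: "2 \<le> M"
    and dims: "\<forall>t\<in>{1..T}. 1 \<le> dV t \<and> 1 \<le> dW t"
    (* problem data *)
    and c_herm: "\<forall>m<M. herm D (c m)"
    and a_herm: "\<forall>j<J. \<forall>m<M. herm D (a j m)"
    and T_sub: "\<T> \<subseteq> T_G M T dV dW" and T_ne: "\<T> \<noteq> {}" and T_convex: "tuple_convex \<T>"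
    and P_closure: "tuple_closure M D \<P> = {\<Phi> \<in> tuple_closure M D \<T>. \<forall>j<J. eta M a b j \<Phi> \<le> 0}"
    and C_sub: "\<C> \<subseteq> C_G M D" and C_closed: "tuple_closure M D \<C> \<subseteq> \<C>"
    and C_convex: "tuple_convex \<C>" and C_cone: "tuple_cone \<C>"
    (* S = S_G *)
    and T_closure: "tuple_closure M D \<T> = {\<Phi> \<in> \<C>. msum M D \<Phi> \<in> S_G T dV dW}"
    (* G-symmetry *)
    and grp: "group G" and fin: "finite (carrier G)"
    and actM_ok: "index_action G M actM" and actJ_ok: "index_action G J actJ"
    and actH_ok: "her_action G D actH"
    and sym_T: "\<forall>g\<in>carrier G. \<forall>\<Phi>\<in>\<T>. tuple_act G M D actM actH g \<Phi> \<in> \<T>"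
    and sym_C: "\<forall>g\<in>carrier G. \<forall>\<Phi>\<in>\<C>. tuple_act G M D actM actH g \<Phi> \<in> \<C>"
    and sym_S: "\<forall>g\<in>carrier G. \<forall>\<phi>\<in>S_G T dV dW. actH g \<phi> \<in> S_G T dV dW"
    and sym_a: "\<forall>g\<in>carrier G. \<forall>j<J. \<forall>m<M. actH g (a j m) = a (actJ g j) (actM g m)"
    and sym_b: "\<forall>g\<in>carrier G. \<forall>j<J. b j = b (actJ g j)"
    and sym_c: "\<forall>g\<in>carrier G. \<forall>m<M. actH g (c m) = c (actM g m)"
    (* unital action *)
    and act_id: "\<forall>g\<in>carrier G. actH g (1\<^sub>m D) = 1\<^sub>m D"
    (* irreducible projective representations *)
    and H_sub: "\<forall>t\<in>{1..T}. subgroup (H t) G"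
    and U_rep: "\<forall>t\<in>{1..T}. proj_rep G (H t) (dV t) (U t)"
    and U_irr: "\<forall>t\<in>{1..T}. irreducible_rep (H t) (dV t) (U t)"
    and U_cov: "\<forall>t\<in>{1..T}. \<forall>h\<in>H t. \<forall>X. herm D X \<longrightarrow>
        ptr_left (Qdim T dV dW t * dW t) (dV t * Rdim dV dW (t-1)) (actH h X) =
        Ad_tensor_id (U t h) (dV t) (Rdim dV dW (t-1))
          (ptr_left (Qdim T dV dW t * dW t) (dV t * Rdim dV dW (t-1)) X)"
  shows "Sup ((\<lambda>\<Phi>. ereal (Pobj M c \<Phi>)) ` \<P>) =
         Sup ((\<lambda>\<Phi>. ereal (Pobj M c \<Phi>)) `
           {\<Phi> \<in> \<C>. msum M D \<Phi> = (1 / of_nat (\<Prod>t\<in>{1..T}. dV t)) \<cdot>\<^sub>m 1\<^sub>m D \<and>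
                     (\<forall>j<J. eta M a b j \<Phi> \<le> 0)})"
proof -
  have T_space: "\<T> \<subseteq> tuple_space M D" and T_psd: "\<forall>\<Phi>\<in>\<T>. \<forall>m<M. psd D (\<Phi> m)"
    and T_S_G: "\<forall>\<Phi>\<in>\<T>. msum M D \<Phi> \<in> S_G T dV dW"
    using T_sub unfolding T_G_def C_G_def D_def by auto
  have P_T: "\<P> \<subseteq> \<T>" unfolding \<P>_def by blast
  have P_C: "\<P> \<subseteq> \<C>" using P_T T_closure subset_tuple_closure[OF T_space] by blast
  have P_convex: "tuple_convex \<P>"
    unfolding \<P>_def using tuple_convex_constrained[OF T_convex T_space] a_herm herm_carrier by blast
  have P_sym: "\<forall>g\<in>carrier G. \<forall>\<Phi>\<in>\<P>. tuple_act G M D actM actH g \<Phi> \<in> \<P>"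
    using sym_T eta_tuple_act[OF grp actH_ok actM_ok actJ_ok _ _ _ a_herm sym_a sym_b] actJ_ok T_psd psd_herm
    unfolding \<P>_def index_action_def by fastforce
  have "Sup ((\<lambda>\<Phi>. ereal (Pobj M c \<Phi>)) ` \<P>) \<le> Sup ((\<lambda>\<Phi>. ereal (Pobj M c \<Phi>)) `
      {\<Phi> \<in> \<C>. msum M D \<Phi> = (1 / of_nat (\<Prod>t\<in>{1..T}. dV t)) \<cdot>\<^sub>m 1\<^sub>m D \<and> (\<forall>j<J. eta M a b j \<Phi> \<le> 0)})"
    unfolding D_def
    by (rule Sup_le_Sup_maximally_mixed[OF T1 dims grp fin _ actM_ok _ P_C P_convex _ _ _ _ _ _ H_sub U_rep U_irr])
       (use actH_ok P_T T_space P_sym T_psd T_S_G c_herm sym_c U_cov psd_herm in \<open>auto simp: D_def \<P>_def\<close>)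
  moreover have "Sup ((\<lambda>\<Phi>. ereal (Pobj M c \<Phi>)) ` {\<Phi> \<in> \<C>. msum M D \<Phi> = (1 / of_nat (\<Prod>t\<in>{1..T}. dV t)) \<cdot>\<^sub>m 1\<^sub>m D \<and>
      (\<forall>j<J. eta M a b j \<Phi> \<le> 0)}) \<le> Sup ((\<lambda>\<Phi>. ereal (Pobj M c \<Phi>)) ` \<P>)"
    unfolding D_def
    by (rule Sup_maximally_mixed_le_Sup[OF T1 dims _ _ P_closure[unfolded D_def] T_closure[unfolded D_def]])
       (use P_T T_space c_herm herm_carrier in \<open>auto simp: D_def\<close>)
  ultimately show ?thesis by (rule antisym)
qed

end
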